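(* For every non-crossing pair partition $\pi$, every $n\ge1$ and every $g\in\mathcal D_n$, $$a_\pi(N)\,\Omega=\phi(a_\pi)\,\Omega+O(1/N),\qquad a_\pi(N)\,v^N_n(g)=v^N_n(a_\pi g)+O(1/N),$$ where $O(1/N)$ denotes a vector of norm at most $C/N$ with $C$ independent of $N$.
   Context: Every non-crossing pair partition $\pi\neq\emptyset$ of $[2n+2]$ decomposes uniquely as $\pi=\{\{1,2m+2\}\}\cup\{B+1:B\in\pi'\}\cup\{B+2m+2:B\in\pi''\}$ with $\pi'$, $\pi''$ non-crossing pair partitions of $[2m]$ and $[2n-2m]$. Define recursively $a_\emptyset=\mathrm{id}$, $a_\pi=a^*a_{\pi'}a\,a_{\pi''}$, and likewise $a_\emptyset(N)=\mathrm{id}$, $a_\pi(N)=a^*(N)a_{\pi'}(N)a(N)a_{\pi''}(N)$. Continuous side: $\mathcal X_{n,m}=\{x_1>\dots>x_m<\dots<x_n\}\subseteq\mathbb{R}^n$, $\mathcal X_n=\bigcup_m\mathcal X_{n,m}$, indicators $\mathbb 1_n,\mathbb 1_{n,m}$; $\mathcal{CV}=\mathbb{C}\Lambda\oplus\bigoplus_{n\ge1}L^2(\mathcal X_n)$, $\phi(T)=\langle T\Lambda,\Lambda\rangle$; $a\Lambda=\mathbb 1_{[0,1]}$, $(ag)(x,\vec x)=\mathbb 1_{[0,1]}(x)\mathbb 1_{n+1}(x,\vec x)g(\vec x)$; $a^*\Lambda=0$, $a^*g=(\int_0^1g)\Lambda$ on $L^2(\mathcal X_1)$, $(a^*g)(\vec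 x)=\mathbb 1_{n,1}(\vec x)\int_0^{x_1}g(x,\vec x)dx+\int_{x_1}^1g(x,\vec x)dx$ on $L^2(\mathcal X_{n+1})$. $\mathcal D_n$: functions in $L^2(\mathcal X_n)$ vanishing outside $[0,1]^n$ and polynomial on each $\mathcal X_{n,m}\cap[0,1]^n$. Discrete side: $\mathcal{DV}$ with orthonormal basis $\{\Omega\}\cup\{e_{i_1}\otimes\dots\otimes e_{i_n}:(i_1,\dots,i_n)\in I_n\}$, $I_n$ the strictly decreasing-then-increasing tuples in $\mathbb{N}_+^n$; $a_i\Omega=e_i$, $a_i(e_{i_1}\otimes\dots\otimes e_{i_n})=\mathbf 1[(i,i_1,\dots,i_n)\in I_{n+1}]e_i\otimes e_{i_1}\otimes\dots\otimes e_{i_n}$; $a(N)=N^{-1/2}\sum_{i\le N}a_i$, $a^*(N)=a(N)^*$; $v^N_n(g)=N^{-n/2}\sum_{(i_1,\dots,i_n)\in I_n\cap[N]^n}g(i_1/N,\dots,i_n/N)e_{i_1}\otimes\dots\otimes e_{i_n}$. *)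

theory Defs
  imports "HOL-Analysis.Analysis"
begin

definition ncpp :: "nat \<Rightarrow> nat set set \<Rightarrow> bool" where
  "ncpp k \<pi> \<longleftrightarrow>
     (\<forall>B\<in>\<pi>. card B = 2) \<and>
     (\<forall>B1\<in>\<pi>. \<forall>B2\<in>\<pi>. B1 \<noteq> B2 \<longrightarrow> B1 \<inter> B2 = {}) \<and>
     \<Union>\<pi> = {1..2*k} \<and>
     (\<forall>B1\<in>\<pi>. \<forall>B2\<in>\<pi>. \<forall>a b c d. a < b \<and> b < c \<and> c < d \<and> B1 = {a, c} \<and> B2 = {b, d} \<longrightarrow> False)"

text \<open>Recursive definition of the word a_pi in an operator pair (ann, cre) = (a, a^*):
  a_emptyset = id, a_pi = a^* a_pi' a a_pi'' for the unique decomposition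
  pi = {{1,2m+2}} + (pi'+1) + (pi''+2m+2).  gen_op n pi A says A is the operator assigned to
  the pair partition pi of [2n].\<close>

inductive gen_op :: "('v \<Rightarrow> 'v) \<Rightarrow> ('v \<Rightarrow> 'v) \<Rightarrow> nat \<Rightarrow> nat set set \<Rightarrow> ('v \<Rightarrow> 'v) \<Rightarrow> bool"
  for ann :: "'v \<Rightarrow> 'v" and cre :: "'v \<Rightarrow> 'v" where
  gen_op_empty: "gen_op ann cre 0 {} id"
| gen_op_step: "gen_op ann cre m \<pi>1 A1 \<Longrightarrow> gen_op ann cre k \<pi>2 A2 \<Longrightarrow>
     gen_op ann cre (m + k + 1)
       ({{1, 2*m+2}} \<union> (\<lambda>B. (\<lambda>x. x + 1) ` B) ` \<pi>1 \<union> (\<lambda>B. (\<lambda>x. x + (2*m+2)) ` B) ` \<pi>2)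
       (cre \<circ> A1 \<circ> ann \<circ> A2)"

definition word_op :: "('v \<Rightarrow> 'v) \<Rightarrow> ('v \<Rightarrow> 'v) \<Rightarrow> nat set set \<Rightarrow> ('v \<Rightarrow> 'v)" where
  "word_op ann cre \<pi> = (THE A. \<exists>n. gen_op ann cre n \<pi> A)"

definition dec_inc_at :: "nat \<Rightarrow> 'a::linorder list \<Rightarrow> bool" where
  "dec_inc_at m xs \<longleftrightarrow> 1 \<le> m \<and> m \<le> length xs \<and>
     (\<forall>i j. i < j \<and> j < m \<longrightarrow> xs ! i > xs ! j) \<and>
     (\<forall>i j. m - 1 \<le> i \<and> i < j \<and> j < length xs \<longrightarrow> xs ! i < xs ! j)"

definition inX :: "real list \<Rightarrow> bool" where
  "inX xs \<longleftrightarrow> (\<exists>m. dec_inc_at m xs)"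

definition inI :: "nat list \<Rightarrow> bool" where
  "inI t \<longleftrightarrow> (\<forall>i\<in>set t. 1 \<le> i) \<and> (\<exists>m. dec_inc_at m t)"

text \<open>A vector of CV = C Lambda + sum_n L^2(X_n) is represented by f :: real list => complex:
  f [] is the Lambda coefficient and f restricted to lists of length n >= 1 is the
  L^2(X_n) component (extended by zero outside X_n).\<close>
type_synonym cvec = "real list \<Rightarrow> complex"

definition Lambda :: cvec where
  "Lambda xs = (if xs = [] then 1 else 0)"

definition ca :: "cvec \<Rightarrow> cvec" where
  "ca f xs = (case xs of [] \<Rightarrow> 0
      | x # ys \<Rightarrow> of_real (indicator {0..1} x * indicator {zs. inX zs} (x # ys)) * f ys)"

definition castar :: "cvec \<Rightarrow> cvec" where
  "castar f xs = (case xs of [] \<Rightarrow> (LINT x:{0..1}|lborel. f [x])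
      | x1 # ys \<Rightarrow>
         (if inX xs then
            (if dec_inc_at 1 xs then (LINT x:{0..x1}|lborel. f (x # xs)) else 0)
            + (LINT x:{x1..1}|lborel. f (x # xs))
          else 0))"

definition phi :: "(cvec \<Rightarrow> cvec) \<Rightarrow> complex" where
  "phi T = T Lambda []"

definition a_cont :: "nat set set \<Rightarrow> cvec \<Rightarrow> cvec" where
  "a_cont \<pi> = word_op ca castar \<pi>"

definition is_poly_fun :: "nat \<Rightarrow> (real list \<Rightarrow> complex) \<Rightarrow> bool" where
  "is_poly_fun n p \<longleftrightarrow> (\<exists>E c. finite (E :: (nat \<Rightarrow> nat) set) \<and>
     (\<forall>xs. length xs = n \<longrightarrow> p xs = (\<Sum>e\<in>E. c e * (\<Prod>i<n. of_real (xs ! i) ^ e i))))"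

definition inD :: "nat \<Rightarrow> cvec \<Rightarrow> bool" where
  "inD n g \<longleftrightarrow>
     (\<forall>xs. g xs \<noteq> 0 \<longrightarrow> length xs = n \<and> inX xs \<and> (\<forall>x\<in>set xs. 0 \<le> x \<and> x \<le> 1)) \<and>
     (\<forall>m\<in>{1..n}. \<exists>p. is_poly_fun n p \<and>
        (\<forall>xs. length xs = n \<and> dec_inc_at m xs \<and> (\<forall>x\<in>set xs. 0 \<le> x \<and> x \<le> 1) \<longrightarrow> g xs = p xs))"

text \<open>A vector of DV is represented by its coefficients u :: nat list => complex w.r.t. the
  orthonormal basis: u [] is the Omega coefficient, u t (t in I_n) the coefficient of
  e_{t_1} (x) ... (x) e_{t_n}.\<close>
type_synonym dvec = "nat list \<Rightarrow> complex"

definition Omega :: dvec where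
  "Omega t = (if t = [] then 1 else 0)"

definition dnorm :: "dvec \<Rightarrow> real" where
  "dnorm u = sqrt (\<Sum>\<^sub>\<infinity>t. (cmod (u t))\<^sup>2)"

text \<open>a_i e_t = [i#t in I] e_{i#t}, and its adjoint a_i^* e_{i#t} = e_t, a_i^* e_s = 0 otherwise.\<close>
definition da_i :: "nat \<Rightarrow> dvec \<Rightarrow> dvec" where
  "da_i i u t = (case t of [] \<Rightarrow> 0 | j # s \<Rightarrow> (if j = i \<and> inI (j # s) then u s else 0))"

definition dastar_i :: "nat \<Rightarrow> dvec \<Rightarrow> dvec" where
  "dastar_i i u s = (if inI (i # s) then u (i # s) else 0)"

definition daN :: "nat \<Rightarrow> dvec \<Rightarrow> dvec" where
  "daN N u t = of_real (1 / sqrt (real N)) * (\<Sum>i\<in>{1..N}. da_i i u t)"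

definition dastarN :: "nat \<Rightarrow> dvec \<Rightarrow> dvec" where
  "dastarN N u t = of_real (1 / sqrt (real N)) * (\<Sum>i\<in>{1..N}. dastar_i i u t)"

definition a_disc :: "nat \<Rightarrow> nat set set \<Rightarrow> dvec \<Rightarrow> dvec" where
  "a_disc N \<pi> = word_op (daN N) (dastarN N) \<pi>"

definition vN :: "nat \<Rightarrow> nat \<Rightarrow> cvec \<Rightarrow> dvec" where
  "vN N n g t = (if length t = n \<and> inI t \<and> (\<forall>i\<in>set t. i \<le> N)
       then of_real (1 / sqrt (real N) ^ n) * g (map (\<lambda>i. real i / real N) t) else 0)"

end

theory Submission
  imports Defs
begin

text \<open>Non-crossing pair partitions are in bijection with binary trees, and \<open>a\<^sub>\<pi>\<close> is the word in
  \<open>a, a\<^sup>*\<close> read off the tree; likewise for \<open>a\<^sub>\<pi>(N)\<close>.  Sampling \<open>g\<close> at the grid points \<open>i/N\<close> intertwines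
  \<open>a(N)\<close> with \<open>a\<close> exactly, while \<open>a\<^sup>*(N)\<close> applied to a sample produces Riemann sums of the integrals
  defining \<open>a\<^sup>*\<close>.  For functions that are polynomial on each piece \<open>x\<^sub>1 > \<dots> > x\<^sub>m < \<dots> < x\<^sub>n\<close> these sums
  are within \<open>O(1/N)\<close> of the integrals uniformly, and \<open>a\<close>, \<open>a\<^sup>*\<close> preserve this class.  As \<open>a(N)\<close> and
  \<open>a\<^sup>*(N)\<close> are contractions, the errors of the factors simply add up along the tree.\<close>

subsection \<open>Polynomials, their integrals and Riemann sums\<close>

lemma is_poly_funI:
  fixes d :: "'j \<Rightarrow> complex" and f :: "'j \<Rightarrow> nat \<Rightarrow> nat"
  assumes "finite J"
    and "\<And>xs. length xs = n \<Longrightarrow> p xs = (\<Sum>j\<in>J. d j * (\<Prod>i<n. of_real (xs ! i) ^ f j i))"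
  shows "is_poly_fun n p"
  unfolding is_poly_fun_def
proof (intro exI conjI allI impI)
  show "finite (f ` J)" using assms(1) by simp
  fix xs :: "real list" assume "length xs = n"
  have "p xs = (\<Sum>j\<in>J. d j * (\<Prod>i<n. of_real (xs ! i) ^ f j i))" using assms(2)[OF \<open>length xs = n\<close>] .
  also have "\<dots> = (\<Sum>e\<in>f ` J. \<Sum>j\<in>{j. j \<in> J \<and> f j = e}. d j * (\<Prod>i<n. of_real (xs ! i) ^ f j i))"
    by (rule sum.image_gen[OF assms(1)])
  also have "\<dots> = (\<Sum>e\<in>f ` J. (\<Sum>j\<in>{j. j \<in> J \<and> f j = e}. d j) * (\<Prod>i<n. of_real (xs ! i) ^ e i))"
    by (intro sum.cong refl) (auto simp: sum_distrib_right)
  finally show "p xs = (\<Sum>e\<in>f ` J. (\<Sum>j\<in>{j. j \<in> J \<and> f j = e}. d j) * (\<Prod>i<n. of_real (xs ! i) ^ e i))" .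
qed

lemma is_poly_fun_add:
  assumes "is_poly_fun n p" "is_poly_fun n q"
  shows "is_poly_fun n (\<lambda>xs. p xs + q xs)"
proof -
  obtain E c where E: "finite E" "\<And>xs. length xs = n \<Longrightarrow> p xs = (\<Sum>e\<in>E. c e * (\<Prod>i<n. of_real (xs ! i) ^ e i))"
    using assms(1) unfolding is_poly_fun_def by blast
  obtain F d where F: "finite F" "\<And>xs. length xs = n \<Longrightarrow> q xs = (\<Sum>e\<in>F. d e * (\<Prod>i<n. of_real (xs ! i) ^ e i))"
    using assms(2) unfolding is_poly_fun_def by blast
  show ?thesis
    by (rule is_poly_funI[where J="E <+> F" and d="case_sum c d" and f="case_sum id id"])
       (use E F in \<open>auto simp: sum.Plus o_def\<close>)
qed

lemma is_poly_fun_cmult: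
  assumes "is_poly_fun n p"
  shows "is_poly_fun n (\<lambda>xs. a * p xs)"
proof -
  obtain E c where E: "finite E" "\<And>xs. length xs = n \<Longrightarrow> p xs = (\<Sum>e\<in>E. c e * (\<Prod>i<n. of_real (xs ! i) ^ e i))"
    using assms(1) unfolding is_poly_fun_def by blast
  show ?thesis
    by (rule is_poly_funI[where J="E" and d="\<lambda>e. a * c e" and f="id"])
       (use E in \<open>auto simp: sum_distrib_left mult.assoc\<close>)
qed

lemma is_poly_fun_const: "is_poly_fun n (\<lambda>xs. a)"
  by (rule is_poly_funI[where J="{()}" and d="\<lambda>_. a" and f="\<lambda>_ _. 0"]) auto

lemma is_poly_fun_tl:
  assumes "is_poly_fun n p"
  shows "is_poly_fun (Suc n) (\<lambda>xs. p (tl xs))"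
proof -
  obtain E c where E: "finite E" "\<And>xs. length xs = n \<Longrightarrow> p xs = (\<Sum>e\<in>E. c e * (\<Prod>i<n. of_real (xs ! i) ^ e i))"
    using assms(1) unfolding is_poly_fun_def by blast
  show ?thesis
  proof (rule is_poly_funI[where J="E" and d="c" and f="\<lambda>e i. if i = 0 then 0 else e (i - 1)"])
    fix xs :: "real list" assume l: "length xs = Suc n"
    then obtain x ys where xs: "xs = x # ys" by (cases xs) auto
    show "p (tl xs) = (\<Sum>j\<in>E. c j * (\<Prod>i<Suc n. of_real (xs ! i) ^ (if i = 0 then 0 else j (i - 1))))"
      using l E(2)[of ys] unfolding xs by (subst prod.lessThan_Suc_shift) simp
  qed (use E in auto)
qed

text \<open>\<open>poly_integral_first E c n a b ys\<close> is the integral over \<open>x \<in> [a, b]\<close> of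
  \<open>poly_expansion E c (Suc n) (x # ys)\<close>.\<close>

definition poly_expansion :: "(nat \<Rightarrow> nat) set \<Rightarrow> ((nat \<Rightarrow> nat) \<Rightarrow> complex) \<Rightarrow> nat \<Rightarrow> real list \<Rightarrow> complex" where
  "poly_expansion E c n xs = (\<Sum>e\<in>E. c e * (\<Prod>i<n. of_real (xs ! i) ^ e i))"

definition tail_monomial :: "nat \<Rightarrow> (nat \<Rightarrow> nat) \<Rightarrow> real list \<Rightarrow> complex" where
  "tail_monomial n e ys = (\<Prod>i<n. of_real (ys ! i) ^ e (Suc i))"

definition poly_integral_first ::
    "(nat \<Rightarrow> nat) set \<Rightarrow> ((nat \<Rightarrow> nat) \<Rightarrow> complex) \<Rightarrow> nat \<Rightarrow> real \<Rightarrow> real \<Rightarrow> real list \<Rightarrow> complex" where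
  "poly_integral_first E c n a b ys =
     (\<Sum>e\<in>E. c e * of_real ((b ^ (e 0 + 1) - a ^ (e 0 + 1)) / real (e 0 + 1)) * tail_monomial n e ys)"

definition coeff_norm :: "(nat \<Rightarrow> nat) set \<Rightarrow> ((nat \<Rightarrow> nat) \<Rightarrow> complex) \<Rightarrow> real" where
  "coeff_norm E c = (\<Sum>e\<in>E. cmod (c e))"

lemma coeff_norm_nonneg: "0 \<le> coeff_norm E c"
  unfolding coeff_norm_def by (rule sum_nonneg) simp

lemma is_poly_fun_iff_poly_expansion:
  "is_poly_fun n p \<longleftrightarrow> (\<exists>E c. finite E \<and> (\<forall>xs. length xs = n \<longrightarrow> p xs = poly_expansion E c n xs))"
  unfolding is_poly_fun_def poly_expansion_def ..

lemma poly_expansion_Cons: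
  "poly_expansion E c (Suc n) (x # ys) = (\<Sum>e\<in>E. c e * of_real x ^ e 0 * tail_monomial n e ys)"
  unfolding poly_expansion_def tail_monomial_def
  by (intro sum.cong refl, subst prod.lessThan_Suc_shift) (simp add: mult.assoc)

lemma is_poly_fun_integral_from_0:
  assumes "finite E" "1 \<le> n"
  shows "is_poly_fun n (\<lambda>ys. poly_integral_first E c n 0 (ys ! 0) ys)"
proof -
  obtain n' where n: "n = Suc n'" using assms(2) by (cases n) auto
  show ?thesis
  proof (rule is_poly_funI[where J="E" and d="\<lambda>e. c e / of_nat (e 0 + 1)"
        and f="\<lambda>e i. if i = 0 then e 0 + 1 + e 1 else e (Suc i)"])
    fix ys :: "real list" assume "length ys = n"
    show "poly_integral_first E c n 0 (ys ! 0) ys = (\<Sum>j\<in>E. c j / of_nat (j 0 + 1) *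
         (\<Prod>i<n. of_real (ys ! i) ^ (if i = 0 then j 0 + 1 + j 1 else j (Suc i))))"
      unfolding poly_integral_first_def tail_monomial_def n
      by (intro sum.cong refl, subst (1 2) prod.lessThan_Suc_shift) (simp add: power_add field_simps)
  qed (use assms in auto)
qed

lemma is_poly_fun_integral_to_1:
  assumes "finite E" "1 \<le> n"
  shows "is_poly_fun n (\<lambda>ys. poly_integral_first E c n (ys ! 0) 1 ys)"
proof -
  have eq: "poly_integral_first E c n (ys ! 0) 1 ys
      = (\<Sum>e\<in>E. c e / of_nat (e 0 + 1) * tail_monomial n e ys) + (-1) * poly_integral_first E c n 0 (ys ! 0) ys"
    for ys
    unfolding poly_integral_first_def
    by (simp only: mult_minus1 flip: diff_conv_add_uminus sum_subtractf)
       (intro sum.cong refl, simp add: diff_divide_distrib algebra_simps)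
  have "is_poly_fun n (\<lambda>ys. \<Sum>e\<in>E. c e / of_nat (e 0 + 1) * tail_monomial n e ys)"
    by (rule is_poly_funI[where J="E" and d="\<lambda>e. c e / of_nat (e 0 + 1)" and f="\<lambda>e i. e (Suc i)"])
       (use assms in \<open>auto simp: tail_monomial_def\<close>)
  then show ?thesis
    unfolding eq by (intro is_poly_fun_add is_poly_fun_cmult is_poly_fun_integral_from_0 assms)
qed

lemma norm_prod_powers_le_1:
  assumes "\<forall>i\<in>I. 0 \<le> x i \<and> x i \<le> 1"
  shows "cmod (\<Prod>i\<in>I. complex_of_real (x i) ^ k i) \<le> 1"
proof -
  have "cmod (\<Prod>i\<in>I. complex_of_real (x i) ^ k i) = (\<Prod>i\<in>I. \<bar>x i\<bar> ^ k i)"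
    by (simp add: prod_norm[symmetric] norm_power)
  also have "\<dots> \<le> 1"
    using assms by (intro prod_le_1) (simp add: power_le_one)
  finally show ?thesis .
qed

lemma norm_tail_monomial_le_1:
  assumes "length ys = n" "\<forall>y\<in>set ys. 0 \<le> y \<and> y \<le> 1"
  shows "cmod (tail_monomial n e ys) \<le> 1"
  unfolding tail_monomial_def using assms by (intro norm_prod_powers_le_1) auto

lemma norm_poly_expansion_le:
  assumes "length xs = n" "\<forall>x\<in>set xs. 0 \<le> x \<and> x \<le> 1"
  shows "cmod (poly_expansion E c n xs) \<le> coeff_norm E c"
proof -
  have "cmod (poly_expansion E c n xs) \<le> (\<Sum>e\<in>E. cmod (c e) * cmod (\<Prod>i<n. of_real (xs ! i) ^ e i))"
    unfolding poly_expansion_def by (rule order.trans[OF norm_sum]) (simp add: norm_mult)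
  also have "\<dots> \<le> coeff_norm E c"
    unfolding coeff_norm_def using assms by (intro sum_mono mult_right_le_one_le norm_prod_powers_le_1) auto
  finally show ?thesis .
qed

lemma set_integral_poly_expansion:
  assumes "finite E" "a \<le> b"
    and "\<And>x. a < x \<Longrightarrow> x < b \<Longrightarrow> f x = poly_expansion E c (Suc n) (x # ys)"
  shows "(LINT x:{a..b}|lborel. f x) = poly_integral_first E c n a b ys"
proof -
  let ?P = "\<lambda>x. \<Sum>e\<in>E. c e * of_real x ^ e 0 * tail_monomial n e ys"
  let ?F = "\<lambda>x. \<Sum>e\<in>E. c e * of_real (x ^ (e 0 + 1) / (e 0 + 1)) * tail_monomial n e ys"
  have "(LINT x:{a..b}|lborel. f x) = (LBINT x=a..b. f x)"
    using assms(2) by (simp add: interval_integral_Icc)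
  also have "\<dots> = (LBINT x : {a<..<b}. f x)"
    using assms(2) by (simp add: interval_integral_Ioo)
  also have "\<dots> = (LBINT x : {a<..<b}. ?P x)"
    by (rule set_lebesgue_integral_cong) (auto simp: assms(3) poly_expansion_Cons)
  also have "\<dots> = (LBINT x=a..b. ?P x)"
    using assms(2) by (simp add: interval_integral_Ioo)
  also have "\<dots> = ?F b - ?F a"
  proof (rule interval_integral_FTC_finite)
    show "continuous_on {min a b..max a b} ?P"
      by (intro continuous_intros)
    fix x
    show "(?F has_vector_derivative ?P x) (at x within {min a b..max a b})"
      unfolding has_vector_derivative_def
      by (rule has_derivative_eq_rhs, (rule derivative_eq_intros refl | simp)+)
         (simp add: scaleR_conv_of_real sum_distrib_left algebra_simps fun_eq_iff)
  qed
  also have "\<dots> = poly_integral_first E c n a b ys"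
    by (simp add: poly_integral_first_def sum_subtractf[symmetric] algebra_simps diff_divide_distrib)
  finally show ?thesis .
qed

lemma power_diff_bounds:
  fixes x y :: real assumes "0 \<le> y" "y \<le> x"
  shows "real (Suc k) * y ^ k * (x - y) \<le> x ^ Suc k - y ^ Suc k"
    and "x ^ Suc k - y ^ Suc k \<le> real (Suc k) * x ^ k * (x - y)"
proof -
  have eq: "x ^ Suc k - y ^ Suc k = (x - y) * (\<Sum>i<Suc k. y ^ (Suc k - Suc i) * x ^ i)"
    by (rule power_diff_sumr2)
  have lo: "y ^ k \<le> y ^ (Suc k - Suc i) * x ^ i" if "i < Suc k" for i
  proof -
    have "y ^ k = y ^ (k - i) * y ^ i" using that by (simp add: power_add[symmetric])
    also have "\<dots> \<le> y ^ (k - i) * x ^ i"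
      by (intro mult_left_mono power_mono) (use assms in auto)
    finally show ?thesis by simp
  qed
  have hi: "y ^ (Suc k - Suc i) * x ^ i \<le> x ^ k" if "i < Suc k" for i
  proof -
    have "y ^ (k - i) \<le> x ^ (k - i)" using assms by (intro power_mono) auto
    hence "y ^ (Suc k - Suc i) * x ^ i \<le> x ^ (k - i) * x ^ i"
      using assms by (intro mult_right_mono) auto
    also have "\<dots> = x ^ k" using that by (simp add: power_add[symmetric])
    finally show ?thesis .
  qed
  have "(\<Sum>i<Suc k. y ^ k) \<le> (\<Sum>i<Suc k. y ^ (Suc k - Suc i) * x ^ i)"
    by (rule sum_mono) (rule lo, simp)
  hence "real (Suc k) * y ^ k \<le> (\<Sum>i<Suc k. y ^ (Suc k - Suc i) * x ^ i)" by simp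
  from mult_left_mono[OF this, of "x - y"] assms
  show "real (Suc k) * y ^ k * (x - y) \<le> x ^ Suc k - y ^ Suc k"
    unfolding eq by (simp add: algebra_simps)
  have "(\<Sum>i<Suc k. y ^ (Suc k - Suc i) * x ^ i) \<le> (\<Sum>i<Suc k. x ^ k)"
    by (rule sum_mono) (rule hi, simp)
  hence "(\<Sum>i<Suc k. y ^ (Suc k - Suc i) * x ^ i) \<le> real (Suc k) * x ^ k" by simp
  from mult_left_mono[OF this, of "x - y"] assms
  show "x ^ Suc k - y ^ Suc k \<le> real (Suc k) * x ^ k * (x - y)"
    unfolding eq by (simp add: algebra_simps)
qed

lemma sum_powers_minus_integral_bounds:
  fixes a b :: nat assumes "a \<le> b"
  shows "0 \<le> (\<Sum>i\<in>{a<..b}. real i ^ k) - (real b ^ Suc k - real a ^ Suc k) / real (Suc k)"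
    and "(\<Sum>i\<in>{a<..b}. real i ^ k) - (real b ^ Suc k - real a ^ Suc k) / real (Suc k) \<le> real b ^ k - real a ^ k"
  using assms
proof (induction b rule: dec_induct)
  case (step b)
  have sum: "(\<Sum>i\<in>{a<..Suc b}. real i ^ k) = real (Suc b) ^ k + (\<Sum>i\<in>{a<..b}. real i ^ k)"
  proof -
    have "{a<..Suc b} = insert (Suc b) {a<..b}" using step.hyps by auto
    then show ?thesis by simp
  qed
  have int: "(real (Suc b) ^ Suc k - real a ^ Suc k) / real (Suc k)
     = (real b ^ Suc k - real a ^ Suc k) / real (Suc k) + (real (Suc b) ^ Suc k - real b ^ Suc k) / real (Suc k)"
    by (simp add: diff_divide_distrib)
  have "real (Suc b) ^ Suc k - real b ^ Suc k \<le> real (Suc k) * real (Suc b) ^ k"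
    using power_diff_bounds(2)[of "real b" "real (Suc b)" k] by simp
  then have upper: "(real (Suc b) ^ Suc k - real b ^ Suc k) / real (Suc k) \<le> real (Suc b) ^ k"
    by (simp add: divide_le_eq mult.commute del: of_nat_Suc)
  have "real (Suc k) * real b ^ k \<le> real (Suc b) ^ Suc k - real b ^ Suc k"
    using power_diff_bounds(1)[of "real b" "real (Suc b)" k] by simp
  then have lower: "real b ^ k \<le> (real (Suc b) ^ Suc k - real b ^ Suc k) / real (Suc k)"
    by (simp add: le_divide_eq mult.commute del: of_nat_Suc)
  show "0 \<le> (\<Sum>i\<in>{a<..Suc b}. real i ^ k) - (real (Suc b) ^ Suc k - real a ^ Suc k) / real (Suc k)"
    and "(\<Sum>i\<in>{a<..Suc b}. real i ^ k) - (real (Suc b) ^ Suc k - real a ^ Suc k) / real (Suc k)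
         \<le> real (Suc b) ^ k - real a ^ k"
    using step.IH upper lower unfolding sum int by linarith+
qed simp_all

lemma riemann_sum_power_error:
  fixes a b N :: nat assumes "a \<le> b" "b \<le> N" "1 \<le> N"
  shows "\<bar>(\<Sum>i\<in>{a<..b}. (real i / real N) ^ k / real N)
          - ((real b / real N) ^ Suc k - (real a / real N) ^ Suc k) / real (Suc k)\<bar> \<le> 1 / real N"
proof -
  let ?S = "\<Sum>i\<in>{a<..b}. real i ^ k" and ?T = "(real b ^ Suc k - real a ^ Suc k) / real (Suc k)"
  have N: "real N > 0" using assms by simp
  have eq: "(\<Sum>i\<in>{a<..b}. (real i / real N) ^ k / real N)
          - ((real b / real N) ^ Suc k - (real a / real N) ^ Suc k) / real (Suc k) = (?S - ?T) / real N ^ Suc k"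
    by (simp add: power_divide sum_divide_distrib[symmetric] diff_divide_distrib mult.commute)
  have "real b ^ k \<le> real N ^ k" using assms by (intro power_mono) auto
  then have "\<bar>?S - ?T\<bar> \<le> real N ^ k"
    using sum_powers_minus_integral_bounds[OF assms(1), of k] zero_le_power[of "real a" k] by linarith
  hence "\<bar>?S - ?T\<bar> / real N ^ Suc k \<le> real N ^ k / real N ^ Suc k"
    using N by (intro divide_right_mono) auto
  also have "\<dots> = 1 / real N" using N by simp
  finally show ?thesis unfolding eq using N by simp
qed

lemma riemann_sum_poly_error:
  assumes "finite E" "a \<le> b" "b \<le> N" "1 \<le> N"
    and ys: "length ys = n" "\<forall>y\<in>set ys. 0 \<le> y \<and> y \<le> 1"
  shows "cmod ((\<Sum>i\<in>{a<..b}. poly_expansion E c (Suc n) ((real i / real N) # ys)) / of_nat N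
           - poly_integral_first E c n (real a / real N) (real b / real N) ys) \<le> coeff_norm E c / real N"
proof -
  define R where "R e = (\<Sum>i\<in>{a<..b}. (real i / real N) ^ e 0 / real N)" for e :: "nat \<Rightarrow> nat"
  define T where "T e = ((real b / real N) ^ Suc (e 0) - (real a / real N) ^ Suc (e 0)) / real (Suc (e 0))"
    for e :: "nat \<Rightarrow> nat"
  have "(\<Sum>i\<in>{a<..b}. poly_expansion E c (Suc n) ((real i / real N) # ys)) / of_nat N
        - poly_integral_first E c n (real a / real N) (real b / real N) ys
      = (\<Sum>e\<in>E. c e * tail_monomial n e ys * of_real (R e - T e))"
    unfolding poly_expansion_Cons poly_integral_first_def R_def T_def
    by (subst sum.swap) (simp add: sum_divide_distrib sum_distrib_left sum_subtractf[symmetric] algebra_simps)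
  also have "cmod \<dots> \<le> (\<Sum>e\<in>E. cmod (c e) * cmod (tail_monomial n e ys) * \<bar>R e - T e\<bar>)"
    by (rule order.trans[OF norm_sum]) (simp add: norm_mult del: of_real_diff)
  also have "\<dots> \<le> (\<Sum>e\<in>E. cmod (c e) * 1 * (1 / real N))"
    unfolding R_def T_def using assms
    by (intro sum_mono mult_mono norm_tail_monomial_le_1 riemann_sum_power_error) auto
  also have "\<dots> = coeff_norm E c / real N" by (simp add: coeff_norm_def sum_divide_distrib)
  finally show ?thesis .
qed

lemma dec_inc_at_map_strict_mono:
  fixes f :: "'a::linorder \<Rightarrow> 'b::linorder"
  assumes "strict_mono f"
  shows "dec_inc_at m (map f xs) \<longleftrightarrow> dec_inc_at m xs"
  unfolding dec_inc_at_def using strict_mono_less[OF assms] by auto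

lemma dec_inc_at_singleton: "dec_inc_at m [x] \<longleftrightarrow> m = 1"
  unfolding dec_inc_at_def by auto

lemma dec_inc_at_unique:
  assumes "dec_inc_at m xs" "dec_inc_at m' xs"
  shows "m = m'"
proof (rule ccontr)
  have *: False if "dec_inc_at m xs" "dec_inc_at m' xs" "m < m'" for m m'
  proof -
    have "xs ! (m - 1) > xs ! m" "xs ! (m - 1) < xs ! m"
      using that unfolding dec_inc_at_def by auto
    then show False by simp
  qed
  assume "m \<noteq> m'"
  then show False using *[OF assms] *[OF assms(2,1)] by linarith
qed

lemma dec_inc_at_ConsD:
  assumes "dec_inc_at m (x # xs)" "xs \<noteq> []"
  shows "(m = 1 \<and> x < hd xs \<and> dec_inc_at 1 xs) \<or> (2 \<le> m \<and> hd xs < x \<and> dec_inc_at (m - 1) xs)"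
proof -
  from assms(1) have m: "1 \<le> m" "m \<le> Suc (length xs)"
    and dec: "\<And>i j. i < j \<Longrightarrow> j < m \<Longrightarrow> (x # xs) ! i > (x # xs) ! j"
    and inc: "\<And>i j. m - 1 \<le> i \<Longrightarrow> i < j \<Longrightarrow> j < Suc (length xs) \<Longrightarrow> (x # xs) ! i < (x # xs) ! j"
    unfolding dec_inc_at_def by auto
  have hd: "hd xs = xs ! 0" using assms(2) by (simp add: hd_conv_nth)
  show ?thesis
  proof (cases "m = 1")
    case True
    have "x < hd xs" using inc[of 0 1] True assms(2) hd by simp
    moreover have "dec_inc_at 1 xs"
      unfolding dec_inc_at_def using inc[of "Suc i" "Suc j" for i j] True assms(2)
      by (auto simp: Suc_le_eq)
    ultimately show ?thesis using True by simp
  next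
    case False
    have "hd xs < x" using dec[of 0 1] False m hd by simp
    moreover have "dec_inc_at (m - 1) xs"
      unfolding dec_inc_at_def using dec[of "Suc i" "Suc j" for i j] inc[of "Suc i" "Suc j" for i j] m False
      by auto
    ultimately show ?thesis using False m by simp
  qed
qed

lemma dec_inc_at_Cons_1:
  assumes "dec_inc_at 1 xs" "x < hd xs"
  shows "dec_inc_at 1 (x # xs)"
proof -
  from assms(1) have inc: "\<And>i j. i < j \<Longrightarrow> j < length xs \<Longrightarrow> xs ! i < xs ! j" and "xs \<noteq> []"
    unfolding dec_inc_at_def by auto
  then have "x < xs ! j" if "j < length xs" for j
  proof (cases j)
    case (Suc j')
    then show ?thesis
      using that assms(2) inc[of 0 j] \<open>xs \<noteq> []\<close> by (simp add: hd_conv_nth)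
  qed (use assms(2) \<open>xs \<noteq> []\<close> in \<open>simp add: hd_conv_nth\<close>)
  then show ?thesis
    unfolding dec_inc_at_def using inc by (auto simp: nth_Cons split: nat.split)
qed

lemma dec_inc_at_Cons_Suc:
  assumes "dec_inc_at m xs" "hd xs < x"
  shows "dec_inc_at (Suc m) (x # xs)"
proof -
  from assms(1) have m: "1 \<le> m" "m \<le> length xs"
    and dec: "\<And>i j. i < j \<Longrightarrow> j < m \<Longrightarrow> xs ! i > xs ! j"
    and inc: "\<And>i j. m - 1 \<le> i \<Longrightarrow> i < j \<Longrightarrow> j < length xs \<Longrightarrow> xs ! i < xs ! j"
    unfolding dec_inc_at_def by auto
  have "xs \<noteq> []" using m by auto
  have "xs ! j < x" if "j < m" for j
  proof (cases j)
    case (Suc j')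
    then show ?thesis
      using that assms(2) dec[of 0 j] \<open>xs \<noteq> []\<close> by (simp add: hd_conv_nth)
  qed (use assms(2) \<open>xs \<noteq> []\<close> in \<open>simp add: hd_conv_nth\<close>)
  then show ?thesis
    unfolding dec_inc_at_def using m dec inc
    by (auto simp: nth_Cons split: nat.split)
qed

lemma ex_dec_inc_at_Cons_iff:
  fixes x :: "'a::linorder"
  assumes "dec_inc_at m xs"
  shows "(\<exists>m'. dec_inc_at m' (x # xs)) \<longleftrightarrow> hd xs < x \<or> (x < hd xs \<and> m = 1)"
proof
  assume "\<exists>m'. dec_inc_at m' (x # xs)"
  moreover have "xs \<noteq> []" using assms(1) unfolding dec_inc_at_def by auto
  ultimately have "(x < hd xs \<and> dec_inc_at 1 xs) \<or> hd xs < x"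
    using dec_inc_at_ConsD by blast
  then show "hd xs < x \<or> (x < hd xs \<and> m = 1)"
    using dec_inc_at_unique[OF assms(1)] by blast
next
  assume "hd xs < x \<or> (x < hd xs \<and> m = 1)"
  then show "\<exists>m'. dec_inc_at m' (x # xs)"
    using dec_inc_at_Cons_Suc[OF assms(1)] dec_inc_at_Cons_1 assms(1) by blast
qed

lemma inI_Cons_tail: "inI (i # s) \<Longrightarrow> s \<noteq> [] \<Longrightarrow> inI s"
  unfolding inI_def using dec_inc_at_ConsD by (metis list.set_intros(2))

lemma inI_Cons_iff:
  assumes "inI s" "dec_inc_at m s"
  shows "inI (i # s) \<longleftrightarrow> 1 \<le> i \<and> (hd s < i \<or> (i < hd s \<and> m = 1))"
  using assms ex_dec_inc_at_Cons_iff[OF assms(2), of i] unfolding inI_def by auto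

lemma inI_singleton: "1 \<le> i \<Longrightarrow> inI [i]"
  unfolding inI_def using dec_inc_at_singleton by auto

lemma dec_inc_at_map_scale:
  "1 \<le> N \<Longrightarrow> dec_inc_at m (map (\<lambda>i. real i / real N) t) \<longleftrightarrow> dec_inc_at m t"
  by (intro dec_inc_at_map_strict_mono strict_monoI) (simp add: divide_strict_right_mono)

lemma inI_imp_inX_scale: "1 \<le> N \<Longrightarrow> inI t \<Longrightarrow> inX (map (\<lambda>i. real i / real N) t)"
  unfolding inI_def inX_def using dec_inc_at_map_scale by blast

definition finite_support :: "dvec \<Rightarrow> bool" where
  "finite_support u \<longleftrightarrow> finite {t. u t \<noteq> 0}"

lemma finite_support_add: "finite_support u \<Longrightarrow> finite_support v \<Longrightarrow> finite_support (\<lambda>t. u t + v t)"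
  unfolding finite_support_def by (rule finite_subset[of _ "{t. u t \<noteq> 0} \<union> {t. v t \<noteq> 0}"]) auto

lemma finite_support_diff: "finite_support u \<Longrightarrow> finite_support v \<Longrightarrow> finite_support (\<lambda>t. u t - v t)"
  unfolding finite_support_def by (rule finite_subset[of _ "{t. u t \<noteq> 0} \<union> {t. v t \<noteq> 0}"]) auto

lemma dnorm_eq_L2_set:
  assumes "finite S" "\<And>t. u t \<noteq> 0 \<Longrightarrow> t \<in> S"
  shows "dnorm u = L2_set (\<lambda>t. cmod (u t)) S"
proof -
  have "(\<Sum>\<^sub>\<infinity>t. (cmod (u t))\<^sup>2) = (\<Sum>\<^sub>\<infinity>t\<in>S. (cmod (u t))\<^sup>2)"
    by (rule infsum_cong_neutral) (use assms(2) in auto)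
  also have "\<dots> = (\<Sum>t\<in>S. (cmod (u t))\<^sup>2)" using assms(1) by simp
  finally show ?thesis unfolding dnorm_def L2_set_def by simp
qed

lemma dnorm_zero: "dnorm (\<lambda>t. 0) = 0"
  using dnorm_eq_L2_set[of "{}" "\<lambda>t. 0"] by simp

lemma dnorm_le_sqrt_card:
  assumes "finite S" "\<And>t. u t \<noteq> 0 \<Longrightarrow> t \<in> S" "\<And>t. t \<in> S \<Longrightarrow> cmod (u t) \<le> B" "0 \<le> B"
  shows "dnorm u \<le> sqrt (real (card S)) * B"
proof -
  have "dnorm u = sqrt (\<Sum>t\<in>S. (cmod (u t))\<^sup>2)"
    using dnorm_eq_L2_set[OF assms(1,2)] unfolding L2_set_def by simp
  also have "\<dots> \<le> sqrt (\<Sum>t\<in>S. B\<^sup>2)"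
    by (intro real_sqrt_le_mono sum_mono power_mono assms(3)) auto
  also have "\<dots> = sqrt (real (card S)) * B" using assms(4) by (simp add: real_sqrt_mult)
  finally show ?thesis .
qed

lemma dnorm_triangle:
  assumes "finite_support u" "finite_support v"
  shows "dnorm (\<lambda>t. u t + v t) \<le> dnorm u + dnorm v"
proof -
  let ?S = "{t. u t \<noteq> 0} \<union> {t. v t \<noteq> 0}"
  have fin: "finite ?S" using assms unfolding finite_support_def by auto
  have "dnorm (\<lambda>t. u t + v t) = L2_set (\<lambda>t. cmod (u t + v t)) ?S"
    by (rule dnorm_eq_L2_set[OF fin]) auto
  also have "\<dots> \<le> L2_set (\<lambda>t. cmod (u t) + cmod (v t)) ?S"
    by (rule L2_set_mono) (auto intro: norm_triangle_ineq)
  also have "\<dots> \<le> L2_set (\<lambda>t. cmod (u t)) ?S + L2_set (\<lambda>t. cmod (v t)) ?S"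
    by (rule L2_set_triangle_ineq)
  also have "L2_set (\<lambda>t. cmod (u t)) ?S = dnorm u" by (rule dnorm_eq_L2_set[OF fin, symmetric]) auto
  also have "L2_set (\<lambda>t. cmod (v t)) ?S = dnorm v" by (rule dnorm_eq_L2_set[OF fin, symmetric]) auto
  finally show ?thesis .
qed

lemma daN_Nil: "daN N u [] = 0"
  unfolding daN_def da_i_def by simp

lemma daN_Cons:
  "daN N u (j # s) = of_real (1 / sqrt (real N)) * (if 1 \<le> j \<and> j \<le> N \<and> inI (j # s) then u s else 0)"
proof -
  have "(\<Sum>i\<in>{1..N}. da_i i u (j # s)) = (\<Sum>i\<in>{1..N}. if i = j then (if inI (j # s) then u s else 0) else 0)"
    unfolding da_i_def by (intro sum.cong) auto
  also have "\<dots> = (if 1 \<le> j \<and> j \<le> N \<and> inI (j # s) then u s else 0)"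
    by (subst sum.delta) auto
  finally show ?thesis unfolding daN_def by simp
qed

lemma dastarN_eq:
  "dastarN N u s = of_real (1 / sqrt (real N)) * (\<Sum>i\<in>{1..N}. if inI (i # s) then u (i # s) else 0)"
  unfolding dastarN_def dastar_i_def by simp

lemma dastarN_nonzeroD:
  assumes "dastarN N u s \<noteq> 0"
  obtains i where "i \<in> {1..N}" "inI (i # s)" "u (i # s) \<noteq> 0"
proof -
  have "(\<Sum>i\<in>{1..N}. if inI (i # s) then u (i # s) else 0) \<noteq> 0"
    using assms unfolding dastarN_eq by auto
  then obtain i where "i \<in> {1..N}" "(if inI (i # s) then u (i # s) else 0) \<noteq> 0"
    by (rule sum.not_neutral_contains_not_neutral)
  then show thesis using that by (auto split: if_splits)
qed

lemma daN_add: "daN N (\<lambda>t. u t + v t) = (\<lambda>t. daN N u t + daN N v t)"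
proof -
  have "da_i i (\<lambda>t. u t + v t) t = da_i i u t + da_i i v t" for i t
    unfolding da_i_def by (cases t) auto
  then show ?thesis
    unfolding daN_def by (intro ext) (simp only: sum.distrib distrib_left)
qed

lemma dastarN_add: "dastarN N (\<lambda>t. u t + v t) = (\<lambda>t. dastarN N u t + dastarN N v t)"
proof -
  have "dastar_i i (\<lambda>t. u t + v t) t = dastar_i i u t + dastar_i i v t" for i t
    unfolding dastar_i_def by auto
  then show ?thesis
    unfolding dastarN_def by (intro ext) (simp only: sum.distrib distrib_left)
qed

lemma finite_support_daN:
  assumes "finite_support u" shows "finite_support (daN N u)"
proof -
  have "{t. daN N u t \<noteq> 0} \<subseteq> (\<lambda>(j, s). j # s) ` ({1..N} \<times> {t. u t \<noteq> 0})"
  proof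
    fix t assume "t \<in> {t. daN N u t \<noteq> 0}"
    then show "t \<in> (\<lambda>(j, s). j # s) ` ({1..N} \<times> {t. u t \<noteq> 0})"
      by (cases t) (auto simp: daN_Nil daN_Cons split: if_splits)
  qed
  moreover have "finite ((\<lambda>(j, s). j # s) ` ({1..N} \<times> {t. u t \<noteq> 0}))"
    using assms unfolding finite_support_def by auto
  ultimately show ?thesis unfolding finite_support_def by (rule finite_subset)
qed

lemma finite_support_dastarN:
  assumes "finite_support u" shows "finite_support (dastarN N u)"
proof -
  have "{s. dastarN N u s \<noteq> 0} \<subseteq> tl ` {t. u t \<noteq> 0}"
    by (auto elim!: dastarN_nonzeroD intro: image_eqI[where x="i # s" for i s])
  moreover have "finite (tl ` {t. u t \<noteq> 0})"
    using assms unfolding finite_support_def by auto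
  ultimately show ?thesis unfolding finite_support_def by (rule finite_subset)
qed

lemma dnorm_daN_le:
  assumes "finite_support u" "1 \<le> N"
  shows "dnorm (daN N u) \<le> dnorm u"
proof -
  let ?S = "{t. u t \<noteq> 0}"
  let ?P = "{1..N} \<times> ?S"
  have finS: "finite ?S" using assms(1) unfolding finite_support_def .
  have N: "real N > 0" using assms(2) by simp
  have "(\<Sum>t\<in>(\<lambda>(j, s). j # s) ` ?P. (cmod (daN N u t))\<^sup>2) = (\<Sum>(j, s)\<in>?P. (cmod (daN N u (j # s)))\<^sup>2)"
    by (subst sum.reindex) (auto simp: inj_on_def case_prod_beta)
  also have "\<dots> \<le> (\<Sum>(j, s)\<in>?P. (cmod (u s))\<^sup>2 / real N)"
    using N by (intro sum_mono) (auto simp: daN_Cons norm_mult norm_divide power_divide)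
  also have "\<dots> = (\<Sum>s\<in>?S. (cmod (u s))\<^sup>2)"
    using N by (simp add: sum.cartesian_product[symmetric] sum_divide_distrib[symmetric])
  finally have "L2_set (\<lambda>t. cmod (daN N u t)) ((\<lambda>(j, s). j # s) ` ?P) \<le> L2_set (\<lambda>t. cmod (u t)) ?S"
    unfolding L2_set_def by simp
  moreover have "dnorm (daN N u) = L2_set (\<lambda>t. cmod (daN N u t)) ((\<lambda>(j, s). j # s) ` ?P)"
  proof (rule dnorm_eq_L2_set)
    fix t assume "daN N u t \<noteq> 0"
    then show "t \<in> (\<lambda>(j, s). j # s) ` ?P"
      by (cases t) (auto simp: daN_Nil daN_Cons split: if_splits)
  qed (use finS in auto)
  ultimately show ?thesis using dnorm_eq_L2_set[OF finS, of u] by simp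
qed

lemma norm_dastarN_sq_le:
  assumes "1 \<le> N"
  shows "(cmod (dastarN N u s))\<^sup>2 \<le> (\<Sum>i\<in>{1..N}. (cmod (u (i # s)))\<^sup>2)"
proof -
  have N: "real N > 0" using assms by simp
  have "cmod (dastarN N u s) = (1 / sqrt (real N)) * cmod (\<Sum>i\<in>{1..N}. if inI (i # s) then u (i # s) else 0)"
    unfolding dastarN_eq by (simp add: norm_mult norm_divide)
  also have "\<dots> \<le> (1 / sqrt (real N)) * (\<Sum>i\<in>{1..N}. cmod (u (i # s)))"
    by (intro mult_left_mono order.trans[OF norm_sum] sum_mono) auto
  finally have "cmod (dastarN N u s) \<le> (1 / sqrt (real N)) * (\<Sum>i\<in>{1..N}. cmod (u (i # s)))" .
  then have "(cmod (dastarN N u s))\<^sup>2 \<le> (\<Sum>i\<in>{1..N}. cmod (u (i # s)))\<^sup>2 / real N"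
    using N power_mono[of _ _ 2] by (fastforce simp: power_mult_distrib power_divide)
  also have "\<dots> \<le> (\<Sum>i\<in>{1..N}. (cmod (u (i # s)))\<^sup>2) * card {1..N} / real N"
    using N by (intro divide_right_mono sum_squared_le_sum_of_squares) auto
  also have "\<dots> = (\<Sum>i\<in>{1..N}. (cmod (u (i # s)))\<^sup>2)" using N by simp
  finally show ?thesis .
qed

lemma dnorm_dastarN_le:
  assumes "finite_support u" "1 \<le> N"
  shows "dnorm (dastarN N u) \<le> dnorm u"
proof -
  let ?S = "{t. u t \<noteq> 0}"
  let ?T = "tl ` ?S"
  let ?U = "(\<lambda>(i, s). i # s) ` ({1..N} \<times> ?T)"
  have finS: "finite ?S" using assms(1) unfolding finite_support_def .
  have finU: "finite ?U" using finS by auto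
  have "(\<Sum>s\<in>?T. (cmod (dastarN N u s))\<^sup>2) \<le> (\<Sum>s\<in>?T. \<Sum>i\<in>{1..N}. (cmod (u (i # s)))\<^sup>2)"
    by (intro sum_mono norm_dastarN_sq_le assms(2))
  also have "\<dots> = (\<Sum>(i, s)\<in>{1..N} \<times> ?T. (cmod (u (i # s)))\<^sup>2)"
    by (subst sum.swap) (simp add: sum.cartesian_product)
  also have "\<dots> = (\<Sum>t\<in>?U. (cmod (u t))\<^sup>2)"
    by (subst sum.reindex) (auto simp: inj_on_def case_prod_beta)
  also have "\<dots> \<le> (\<Sum>t\<in>?U \<union> ?S. (cmod (u t))\<^sup>2)"
    using finU finS by (intro sum_mono2) auto
  also have "\<dots> = (\<Sum>t\<in>?S. (cmod (u t))\<^sup>2)"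
    using finU finS by (intro sum.mono_neutral_right) auto
  finally have "L2_set (\<lambda>t. cmod (dastarN N u t)) ?T \<le> L2_set (\<lambda>t. cmod (u t)) ?S"
    unfolding L2_set_def by simp
  moreover have "dnorm (dastarN N u) = L2_set (\<lambda>t. cmod (dastarN N u t)) ?T"
    using finS by (intro dnorm_eq_L2_set)
      (auto elim!: dastarN_nonzeroD intro: image_eqI[where x="i # s" for i s])
  ultimately show ?thesis using dnorm_eq_L2_set[OF finS, of u] by simp
qed

subsection \<open>Non-crossing pair partitions as binary trees\<close>

abbreviation shift_blocks :: "nat \<Rightarrow> nat set set \<Rightarrow> nat set set" where
  "shift_blocks c \<pi> \<equiv> (\<lambda>B. (\<lambda>x. x + c) ` B) ` \<pi>"

datatype pair_tree = Leaf | Node pair_tree pair_tree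

fun tree_size :: "pair_tree \<Rightarrow> nat" where
  "tree_size Leaf = 0"
| "tree_size (Node a b) = tree_size a + tree_size b + 1"

fun tree_partition :: "pair_tree \<Rightarrow> nat set set" where
  "tree_partition Leaf = {}"
| "tree_partition (Node a b) = {{1, 2 * tree_size a + 2}} \<union> shift_blocks 1 (tree_partition a)
     \<union> shift_blocks (2 * tree_size a + 2) (tree_partition b)"

fun tree_word :: "('v \<Rightarrow> 'v) \<Rightarrow> ('v \<Rightarrow> 'v) \<Rightarrow> pair_tree \<Rightarrow> 'v \<Rightarrow> 'v" where
  "tree_word ann cre Leaf = id"
| "tree_word ann cre (Node a b) = cre \<circ> tree_word ann cre a \<circ> ann \<circ> tree_word ann cre b"

lemma gen_op_imp_tree:
  "gen_op ann cre n \<pi> A \<Longrightarrow> \<exists>t. n = tree_size t \<and> \<pi> = tree_partition t \<and> A = tree_word ann cre t"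
proof (induction rule: gen_op.induct)
  case gen_op_empty
  show ?case by (rule exI[of _ Leaf]) simp
next
  case (gen_op_step m \<pi>1 A1 k \<pi>2 A2)
  then show ?case by (metis tree_size.simps(2) tree_partition.simps(2) tree_word.simps(2))
qed

lemma Union_tree_partition: "\<Union>(tree_partition t) = {1..2 * tree_size t}"
proof (induction t)
  case (Node a b)
  have shift: "\<Union>(shift_blocks c \<pi>) = {1 + c..n + c}" if "\<Union>\<pi> = {1..n}" for c n and \<pi> :: "nat set set"
  proof -
    have "\<Union>(shift_blocks c \<pi>) = (\<lambda>x. x + c) ` {1..n}" using that by (simp flip: image_Union)
    also have "\<dots> = {1 + c..n + c}"
      by (auto intro!: image_eqI[where x="x - c" for x])
    finally show ?thesis .
  qed
  show ?case
    unfolding tree_partition.simps Union_Un_distrib shift[OF Node.IH(1)] shift[OF Node.IH(2)] by auto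
qed simp

lemma card_tree_partition: "B \<in> tree_partition t \<Longrightarrow> card B = 2"
  by (induction t arbitrary: B) (auto simp: card_image inj_on_def)

lemma shift_blocks_eq_iff: "shift_blocks c \<pi> = shift_blocks c \<pi>' \<longleftrightarrow> \<pi> = \<pi>'"
proof -
  have "inj (\<lambda>B::nat set. (\<lambda>x. x + c) ` B)"
    by (rule injI) (simp add: inj_image_eq_iff)
  then show ?thesis by (simp add: inj_image_eq_iff)
qed

lemma tree_partition_Node_split:
  fixes a b :: pair_tree
  defines "j \<equiv> 2 * tree_size a + 2"
  shows "{B \<in> tree_partition (Node a b). 1 \<in> B} = {{1, j}}"
    and "{B \<in> tree_partition (Node a b). B \<subseteq> {2..j - 1}} = shift_blocks 1 (tree_partition a)"
    and "{B \<in> tree_partition (Node a b). B \<subseteq> {j + 1..}} = shift_blocks j (tree_partition b)"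
proof -
  have sub: "B \<subseteq> {1..2 * tree_size c}" "B \<noteq> {}" if "B \<in> tree_partition c" for B c
    using that Union_tree_partition[of c] card_tree_partition[of B c] by auto
  show "{B \<in> tree_partition (Node a b). 1 \<in> B} = {{1, j}}"
    using sub unfolding j_def by fastforce
  show "{B \<in> tree_partition (Node a b). B \<subseteq> {2..j - 1}} = shift_blocks 1 (tree_partition a)"
    using sub unfolding j_def by (fastforce simp: subset_iff)
  show "{B \<in> tree_partition (Node a b). B \<subseteq> {j + 1..}} = shift_blocks j (tree_partition b)"
    using sub unfolding j_def by (fastforce simp: subset_iff)
qed

lemma inj_tree_partition: "inj tree_partition"
proof (rule injI)
  fix t t' show "tree_partition t = tree_partition t' \<Longrightarrow> t = t'"
  proof (induction t arbitrary: t')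
    case Leaf
    then show ?case by (cases t') auto
  next
    case (Node a b)
    then obtain a' b' where t': "t' = Node a' b'" by (cases t') auto
    have same: "{B \<in> tree_partition (Node a b). P B} = {B \<in> tree_partition (Node a' b'). P B}" for P
      using Node.prems t' by simp
    have "{{1, 2 * tree_size a + 2}} = {{1, 2 * tree_size a' + 2}}"
      using same[of "\<lambda>B. 1 \<in> B"] by (simp only: tree_partition_Node_split(1))
    then have size: "tree_size a = tree_size a'" by (auto simp: doubleton_eq_iff)
    have "shift_blocks 1 (tree_partition a) = {B \<in> tree_partition (Node a b). B \<subseteq> {2..2 * tree_size a + 2 - 1}}"
      by (rule tree_partition_Node_split(2)[symmetric])
    also have "\<dots> = {B \<in> tree_partition (Node a' b'). B \<subseteq> {2..2 * tree_size a' + 2 - 1}}"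
      by (simp only: same size)
    also have "\<dots> = shift_blocks 1 (tree_partition a')"
      by (rule tree_partition_Node_split(2))
    finally have "tree_partition a = tree_partition a'" by (simp only: shift_blocks_eq_iff)
    have "shift_blocks (2 * tree_size a + 2) (tree_partition b)
        = {B \<in> tree_partition (Node a b). B \<subseteq> {2 * tree_size a + 2 + 1..}}"
      by (rule tree_partition_Node_split(3)[symmetric])
    also have "\<dots> = {B \<in> tree_partition (Node a' b'). B \<subseteq> {2 * tree_size a' + 2 + 1..}}"
      by (simp only: same size)
    also have "\<dots> = shift_blocks (2 * tree_size a + 2) (tree_partition b')"
      unfolding size by (rule tree_partition_Node_split(3))
    finally have "tree_partition b = tree_partition b'" by (simp only: shift_blocks_eq_iff)
    then show ?case using Node.IH \<open>tree_partition a = tree_partition a'\<close> t' by simp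
  qed
qed

lemma gen_op_tree_partition: "gen_op ann cre (tree_size t) (tree_partition t) (tree_word ann cre t)"
proof (induction t)
  case Leaf
  then show ?case by (metis gen_op_empty tree_size.simps(1) tree_partition.simps(1) tree_word.simps(1))
next
  case (Node a b)
  then show ?case
    unfolding tree_size.simps tree_partition.simps tree_word.simps by (rule gen_op_step)
qed

lemma word_op_tree_partition: "word_op ann cre (tree_partition t) = tree_word ann cre t"
  unfolding word_op_def
proof (rule the_equality)
  show "\<exists>n. gen_op ann cre n (tree_partition t) (tree_word ann cre t)"
    using gen_op_tree_partition by blast
  fix A assume "\<exists>n. gen_op ann cre n (tree_partition t) A"
  then obtain t' where "tree_partition t = tree_partition t'" "A = tree_word ann cre t'"
    using gen_op_imp_tree by metis
  then show "A = tree_word ann cre t" using inj_tree_partition by (metis injD)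
qed

definition noncrossing :: "nat set set \<Rightarrow> bool" where
  "noncrossing \<pi> \<longleftrightarrow>
     (\<forall>B1\<in>\<pi>. \<forall>B2\<in>\<pi>. \<forall>a b c d. a < b \<and> b < c \<and> c < d \<and> B1 = {a, c} \<and> B2 = {b, d} \<longrightarrow> False)"

lemma ncpp_iff:
  "ncpp k \<pi> \<longleftrightarrow> (\<forall>B\<in>\<pi>. card B = 2) \<and> (\<forall>B1\<in>\<pi>. \<forall>B2\<in>\<pi>. B1 \<noteq> B2 \<longrightarrow> B1 \<inter> B2 = {}) \<and>
     \<Union>\<pi> = {1..2*k} \<and> noncrossing \<pi>"
  unfolding ncpp_def noncrossing_def by blast

lemma noncrossingD:
  "noncrossing \<pi> \<Longrightarrow> {a, c} \<in> \<pi> \<Longrightarrow> {b, d} \<in> \<pi> \<Longrightarrow> a < b \<Longrightarrow> b < c \<Longrightarrow> c < d \<Longrightarrow> False"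
  unfolding noncrossing_def by blast

lemma noncrossing_subset: "noncrossing \<pi> \<Longrightarrow> P \<subseteq> \<pi> \<Longrightarrow> noncrossing P"
  unfolding noncrossing_def by (meson subsetD)

lemma noncrossing_shift_blocksD:
  assumes "noncrossing (shift_blocks c Q)"
  shows "noncrossing Q"
  unfolding noncrossing_def
proof (intro ballI allI impI)
  fix B1 B2 a b d e
  assume "B1 \<in> Q" "B2 \<in> Q" and crossing: "a < b \<and> b < d \<and> d < e \<and> B1 = {a, d} \<and> B2 = {b, e}"
  then have "(\<lambda>x. x + c) ` {a, d} \<in> shift_blocks c Q" "(\<lambda>x. x + c) ` {b, e} \<in> shift_blocks c Q"
    by blast+
  then have "{a + c, d + c} \<in> shift_blocks c Q" "{b + c, e + c} \<in> shift_blocks c Q" by simp_all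
  moreover have "a + c < b + c" "b + c < d + c" "d + c < e + c" using crossing by auto
  ultimately show False by (rule noncrossingD[OF assms])
qed

lemma card_Union_pairs:
  assumes "finite F" "\<forall>B\<in>F. card B = 2" "\<forall>B1\<in>F. \<forall>B2\<in>F. B1 \<noteq> B2 \<longrightarrow> B1 \<inter> B2 = {}"
  shows "card (\<Union>F) = 2 * card F"
proof -
  have "finite B" if "B \<in> F" for B using assms(2) that card.infinite by fastforce
  then have "card (\<Union>F) = sum card F"
    using assms(3) by (intro card_Union_disjoint) (auto simp: pairwise_def disjnt_def)
  also have "\<dots> = 2 * card F" using assms(2) by simp
  finally show ?thesis .
qed

lemma ncpp_shift_down:
  assumes "ncpp k \<pi>" "P \<subseteq> \<pi>" "\<Union>P = {c+1..c+2*m}"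
  shows "ncpp m ((\<lambda>B. (\<lambda>x. x - c) ` B) ` P)" and "shift_blocks c ((\<lambda>B. (\<lambda>x. x - c) ` B) ` P) = P"
proof -
  let ?f = "\<lambda>x::nat. x - c"
  from assms(1) have "\<forall>B\<in>\<pi>. card B = 2"
    and "\<forall>B1\<in>\<pi>. \<forall>B2\<in>\<pi>. B1 \<noteq> B2 \<longrightarrow> B1 \<inter> B2 = {}" and "noncrossing \<pi>"
    unfolding ncpp_iff by auto
  with assms(2) have cards: "\<forall>B\<in>P. card B = 2"
    and disj: "\<forall>B1\<in>P. \<forall>B2\<in>P. B1 \<noteq> B2 \<longrightarrow> B1 \<inter> B2 = {}" and nc: "noncrossing P"
    by (meson subsetD noncrossing_subset)+
  have sub: "B \<subseteq> {c+1..}" if "B \<in> P" for B using assms(3) that by auto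
  have inj: "inj_on ?f {c+1..}" by (auto simp: inj_on_def)
  have unshift: "(\<lambda>x. x + c) ` (?f ` B) = B" if "B \<in> P" for B
  proof -
    have "(\<lambda>x. x + c) ` (?f ` B) = (\<lambda>x. x - c + c) ` B" by (simp add: image_image)
    also have "\<dots> = id ` B" using sub[OF that] by (intro image_cong) auto
    finally show ?thesis by simp
  qed
  show shift_back: "shift_blocks c ((\<lambda>B. ?f ` B) ` P) = P"
    using unshift by (simp add: image_image)
  show "ncpp m ((\<lambda>B. ?f ` B) ` P)"
    unfolding ncpp_iff
  proof (intro conjI ballI impI)
    fix B' assume "B' \<in> (\<lambda>B. ?f ` B) ` P"
    then obtain B where "B \<in> P" "B' = ?f ` B" by blast
    then show "card B' = 2" using cards sub inj_on_subset[OF inj] by (simp add: card_image)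
  next
    fix B1' B2' assume "B1' \<in> (\<lambda>B. ?f ` B) ` P" "B2' \<in> (\<lambda>B. ?f ` B) ` P" "B1' \<noteq> B2'"
    then obtain B1 B2 where B: "B1 \<in> P" "B1' = ?f ` B1" "B2 \<in> P" "B2' = ?f ` B2" "B1 \<noteq> B2" by blast
    have "inj_on ?f (B1 \<union> B2)" by (rule inj_on_subset[OF inj]) (use sub B in auto)
    then show "B1' \<inter> B2' = {}"
      using B disj inj_on_image_Int[of ?f "B1 \<union> B2" B1 B2] by simp
  next
    have "\<Union>((\<lambda>B. ?f ` B) ` P) = ?f ` {c+1..c+2*m}" by (simp add: assms(3) flip: image_Union)
    also have "\<dots> = {1..2*m}" by (auto intro!: image_eqI[where x="x + c" for x])
    finally show "\<Union>((\<lambda>B. ?f ` B) ` P) = {1..2*m}" .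
  next
    show "noncrossing ((\<lambda>B. ?f ` B) ` P)"
      using noncrossing_shift_blocksD nc shift_back by metis
  qed
qed

lemma Union_blocks_within:
  assumes "\<And>B. B \<in> \<pi> \<Longrightarrow> B \<subseteq> A \<or> B \<inter> A = {}" "A \<subseteq> \<Union>\<pi>"
  shows "\<Union>{B \<in> \<pi>. B \<subseteq> A} = A"
proof
  show "A \<subseteq> \<Union>{B \<in> \<pi>. B \<subseteq> A}"
  proof
    fix x assume "x \<in> A"
    with assms(2) obtain B where "B \<in> \<pi>" "x \<in> B" by auto
    with assms(1) \<open>x \<in> A\<close> show "x \<in> \<Union>{B \<in> \<pi>. B \<subseteq> A}" by auto
  qed
qed auto

lemma ncpp_block_of_1_separates:
  assumes "ncpp k \<pi>" "{1, j} \<in> \<pi>" "1 < j" "B \<in> \<pi>" "B \<noteq> {1, j}"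
  shows "B \<subseteq> {2..j-1} \<or> B \<subseteq> {j+1..2*k}"
proof -
  from assms(1) have cards: "\<forall>B\<in>\<pi>. card B = 2"
    and disj: "\<forall>B1\<in>\<pi>. \<forall>B2\<in>\<pi>. B1 \<noteq> B2 \<longrightarrow> B1 \<inter> B2 = {}"
    and un: "\<Union>\<pi> = {1..2*k}" and nc: "noncrossing \<pi>"
    unfolding ncpp_iff by auto
  obtain x y where "B = {x, y}" "x \<noteq> y" using cards assms(4) card_2_iff by metis
  then obtain b d where bd: "B = {b, d}" "b < d"
    by (metis insert_commute linorder_neqE)
  have "B \<inter> {1, j} = {}" using disj assms(2,4,5) by simp
  moreover have "B \<subseteq> {1..2*k}" using un assms(4) by auto
  ultimately have B: "1 < b" "d \<le> 2*k" "b \<noteq> j" "d \<noteq> j" using bd by auto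
  have "\<not> (b < j \<and> j < d)"
    using noncrossingD[OF nc assms(2), of b d] assms(4) bd B by auto
  then have "d < j \<or> j < b" using B bd by linarith
  then show ?thesis using B bd by auto
qed

lemma ncpp_block_of_1:
  assumes "ncpp k \<pi>" "0 < k"
  obtains j where "{1, j} \<in> \<pi>" "1 < j" "j \<le> 2*k"
proof -
  from assms(1) have cards: "\<forall>B\<in>\<pi>. card B = 2" and un: "\<Union>\<pi> = {1..2*k}"
    unfolding ncpp_iff by auto
  have "1 \<in> \<Union>\<pi>" using un assms(2) by simp
  then obtain B0 where B0: "B0 \<in> \<pi>" "1 \<in> B0" by blast
  obtain j where j: "B0 = {1, j}" "j \<noteq> 1"
  proof -
    obtain x y where "B0 = {x, y}" "x \<noteq> y" using cards B0(1) card_2_iff by metis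
    then show thesis using that B0(2) by (metis doubleton_eq_iff insert_iff singletonD)
  qed
  have "j \<in> \<Union>\<pi>" using B0(1) j(1) by blast
  then show thesis using that B0(1) j un by auto
qed

lemma ncpp_Union_inside_outside:
  assumes "ncpp k \<pi>" "{1, j} \<in> \<pi>" "1 < j" "j \<le> 2*k"
  shows "\<Union>{B \<in> \<pi>. B \<subseteq> {2..j-1}} = {2..j-1}" and "\<Union>{B \<in> \<pi>. B \<subseteq> {j+1..2*k}} = {j+1..2*k}"
proof -
  have un: "\<Union>\<pi> = {1..2*k}" using assms(1) unfolding ncpp_iff by auto
  have blocks: "B = {1, j} \<or> B \<subseteq> {2..j-1} \<or> B \<subseteq> {j+1..2*k}" if "B \<in> \<pi>" for B
    using ncpp_block_of_1_separates[OF assms(1-3) that] by blast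
  have disjoint: "{2..j-1} \<inter> {j+1..2*k} = {}" "{1, j} \<inter> {2..j-1} = {}" "{1, j} \<inter> {j+1..2*k} = {}"
    using assms(3) by auto
  show "\<Union>{B \<in> \<pi>. B \<subseteq> {2..j-1}} = {2..j-1}"
    by (rule Union_blocks_within) (use blocks disjoint un assms(4) in blast, use un assms(4) in auto)
  show "\<Union>{B \<in> \<pi>. B \<subseteq> {j+1..2*k}} = {j+1..2*k}"
    by (rule Union_blocks_within) (use blocks disjoint un in blast, use un in auto)
qed

lemma ncpp_decompose:
  assumes "ncpp k \<pi>" "0 < k"
  obtains m1 m2 \<pi>1 \<pi>2 where "k = m1 + m2 + 1" "ncpp m1 \<pi>1" "ncpp m2 \<pi>2"
    "\<pi> = {{1, 2 * m1 + 2}} \<union> shift_blocks 1 \<pi>1 \<union> shift_blocks (2 * m1 + 2) \<pi>2"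
proof -
  from assms(1) have cards: "\<forall>B\<in>\<pi>. card B = 2"
    and disj: "\<forall>B1\<in>\<pi>. \<forall>B2\<in>\<pi>. B1 \<noteq> B2 \<longrightarrow> B1 \<inter> B2 = {}"
    and un: "\<Union>\<pi> = {1..2*k}"
    unfolding ncpp_iff by auto
  have fin: "finite \<pi>"
    by (rule finite_subset[of _ "Pow {1..2*k}"]) (use un in auto)
  obtain j where j: "{1, j} \<in> \<pi>" "1 < j" "j \<le> 2*k" using ncpp_block_of_1[OF assms] .
  define \<pi>1 where "\<pi>1 = {B \<in> \<pi>. B \<subseteq> {2..j-1}}"
  define \<pi>2 where "\<pi>2 = {B \<in> \<pi>. B \<subseteq> {j+1..2*k}}"
  have "\<pi> \<subseteq> {{1, j}} \<union> \<pi>1 \<union> \<pi>2"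
    using ncpp_block_of_1_separates[OF assms(1) j(1,2)] unfolding \<pi>1_def \<pi>2_def by blast
  then have split: "\<pi> = {{1, j}} \<union> \<pi>1 \<union> \<pi>2"
    using j(1) unfolding \<pi>1_def \<pi>2_def by blast
  have sub1: "\<pi>1 \<subseteq> \<pi>" and sub2: "\<pi>2 \<subseteq> \<pi>" unfolding \<pi>1_def \<pi>2_def by auto
  note un1 = ncpp_Union_inside_outside(1)[OF assms(1) j, folded \<pi>1_def]
  note un2 = ncpp_Union_inside_outside(2)[OF assms(1) j, folded \<pi>2_def]
  define m1 where "m1 = card \<pi>1"
  define m2 where "m2 = card \<pi>2"
  have "j - 2 = 2 * m1"
    using card_Union_pairs[of \<pi>1] finite_subset[OF sub1 fin] sub1 cards disj un1
    unfolding m1_def by (simp add: subset_iff)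
  moreover have "2*k - j = 2 * m2"
    using card_Union_pairs[of \<pi>2] finite_subset[OF sub2 fin] sub2 cards disj un2
    unfolding m2_def by (simp add: subset_iff)
  ultimately have j_eq: "j = 2 * m1 + 2" and k_eq: "k = m1 + m2 + 1"
    using j by linarith+
  have "\<Union>\<pi>1 = {1+1..1+2*m1}" using un1 j_eq by simp
  note shift1 = ncpp_shift_down[OF assms(1) sub1 this]
  have "\<Union>\<pi>2 = {j+1..j+2*m2}" using un2 j_eq k_eq by simp
  note shift2 = ncpp_shift_down[OF assms(1) sub2 this]
  show thesis
    using that[OF k_eq shift1(1) shift2(1)] shift1(2) shift2(2) split j_eq by simp
qed

lemma ncpp_imp_tree_partition: "ncpp k \<pi> \<Longrightarrow> \<exists>t. tree_partition t = \<pi> \<and> tree_size t = k"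
proof (induction k arbitrary: \<pi> rule: less_induct)
  case (less k)
  show ?case
  proof (cases "k = 0")
    case True
    with less.prems have "\<Union>\<pi> = {}" "\<forall>B\<in>\<pi>. card B = 2" unfolding ncpp_iff by auto
    then have "\<pi> = {}" by fastforce
    then show ?thesis using True by (intro exI[of _ Leaf]) simp
  next
    case False
    then obtain m1 m2 \<pi>1 \<pi>2 where k: "k = m1 + m2 + 1" and "ncpp m1 \<pi>1" "ncpp m2 \<pi>2"
      and \<pi>: "\<pi> = {{1, 2 * m1 + 2}} \<union> shift_blocks 1 \<pi>1 \<union> shift_blocks (2 * m1 + 2) \<pi>2"
      using ncpp_decompose[OF less.prems] by blast
    then obtain t1 t2 where "tree_partition t1 = \<pi>1" "tree_size t1 = m1"
      "tree_partition t2 = \<pi>2" "tree_size t2 = m2"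
      using less.IH[of m1 \<pi>1] less.IH[of m2 \<pi>2] by auto
    then show ?thesis using k \<pi> by (intro exI[of _ "Node t1 t2"]) simp
  qed
qed

text \<open>\<open>inD\<close> extended by the scalars at \<open>n = 0\<close>: in this encoding \<open>inX []\<close> is false, so the
  \<open>\<Lambda>\<close>-component has to be admitted separately; likewise \<open>sample\<close> extends \<open>vN\<close> to \<open>n = 0\<close>.\<close>

definition piecewise_poly :: "nat \<Rightarrow> cvec \<Rightarrow> bool" where
  "piecewise_poly n g \<longleftrightarrow>
     (\<forall>xs. g xs \<noteq> 0 \<longrightarrow> length xs = n \<and> (n = 0 \<or> inX xs) \<and> (\<forall>x\<in>set xs. 0 \<le> x \<and> x \<le> 1)) \<and>
     (\<forall>m\<in>{1..n}. \<exists>p. is_poly_fun n p \<and>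
        (\<forall>xs. length xs = n \<and> dec_inc_at m xs \<and> (\<forall>x\<in>set xs. 0 \<le> x \<and> x \<le> 1) \<longrightarrow> g xs = p xs))"

lemma piecewise_polyI:
  assumes "\<And>xs. g xs \<noteq> 0 \<Longrightarrow> length xs = n \<and> (n = 0 \<or> inX xs) \<and> (\<forall>x\<in>set xs. 0 \<le> x \<and> x \<le> 1)"
    and "\<And>m. m \<in> {1..n} \<Longrightarrow> \<exists>p. is_poly_fun n p \<and>
           (\<forall>xs. length xs = n \<and> dec_inc_at m xs \<and> (\<forall>x\<in>set xs. 0 \<le> x \<and> x \<le> 1) \<longrightarrow> g xs = p xs)"
  shows "piecewise_poly n g"
  using assms unfolding piecewise_poly_def by blast

lemma piecewise_poly_supportD:
  assumes "piecewise_poly n g" "g xs \<noteq> 0"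
  shows "length xs = n" "n = 0 \<or> inX xs" "\<forall>x\<in>set xs. 0 \<le> x \<and> x \<le> 1"
  using assms unfolding piecewise_poly_def by auto

lemma piecewise_polyE:
  assumes "piecewise_poly n g" "m \<in> {1..n}"
  obtains p where "is_poly_fun n p"
    "\<And>xs. length xs = n \<Longrightarrow> dec_inc_at m xs \<Longrightarrow> \<forall>x\<in>set xs. 0 \<le> x \<and> x \<le> 1 \<Longrightarrow> g xs = p xs"
proof -
  from assms have "\<exists>p. is_poly_fun n p \<and>
      (\<forall>xs. length xs = n \<and> dec_inc_at m xs \<and> (\<forall>x\<in>set xs. 0 \<le> x \<and> x \<le> 1) \<longrightarrow> g xs = p xs)"
    unfolding piecewise_poly_def by (elim conjE bspec)
  then show thesis using that by blast
qed

definition sample :: "nat \<Rightarrow> nat \<Rightarrow> cvec \<Rightarrow> dvec" where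
  "sample N n g t = (if length t = n \<and> (n = 0 \<or> inI t) \<and> (\<forall>i\<in>set t. i \<le> N)
       then of_real (1 / sqrt (real N) ^ n) * g (map (\<lambda>i. real i / real N) t) else 0)"

lemma inD_imp_piecewise_poly: "1 \<le> n \<Longrightarrow> inD n g \<Longrightarrow> piecewise_poly n g"
  unfolding inD_def piecewise_poly_def by auto

lemma piecewise_poly_Lambda: "piecewise_poly 0 Lambda"
  unfolding piecewise_poly_def Lambda_def by auto

lemma sample_eq_vN: "1 \<le> n \<Longrightarrow> sample N n g = vN N n g"
  unfolding sample_def vN_def by (intro ext) auto

lemma sample_0: "sample N 0 g t = (if t = [] then g [] else 0)"
  unfolding sample_def by auto

lemma finite_support_sample: "finite_support (sample N n g)"
proof -
  have "{t. sample N n g t \<noteq> 0} \<subseteq> {t. set t \<subseteq> {0..N} \<and> length t = n}"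
    unfolding sample_def by (auto split: if_splits)
  moreover have "finite {t. set t \<subseteq> {0..N} \<and> length t = n}"
    by (rule finite_lists_length_eq) simp
  ultimately show ?thesis unfolding finite_support_def by (rule finite_subset)
qed

lemma ca_Cons:
  "ca g (x # ys) = of_real (indicator {0..1} x * indicator {zs. inX zs} (x # ys)) * g ys"
  unfolding ca_def by simp

lemma ca_piecewise_poly:
  assumes "piecewise_poly n g"
  shows "piecewise_poly (Suc n) (ca g)"
proof (rule piecewise_polyI)
  fix xs assume "ca g xs \<noteq> 0"
  then obtain x ys where "xs = x # ys" "x \<in> {0..1}" "inX (x # ys)" "g ys \<noteq> 0"
    unfolding ca_def by (auto split: list.splits split_indicator_asm)
  then show "length xs = Suc n \<and> (Suc n = 0 \<or> inX xs) \<and> (\<forall>x\<in>set xs. 0 \<le> x \<and> x \<le> 1)"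
    using piecewise_poly_supportD[OF assms, of ys] by auto
next
  fix m assume m: "m \<in> {1..Suc n}"
  define m' where "m' = (if m = 1 then 1 else m - 1)"
  text \<open>On the piece \<open>dec_inc_at m\<close> of \<open>X\<^sub>n\<^sub>+\<^sub>1\<close> the tail lies in the piece \<open>dec_inc_at m'\<close> of \<open>X\<^sub>n\<close>.\<close>
  obtain p where p: "is_poly_fun n p"
    "\<And>ys. length ys = n \<Longrightarrow> (n = 0 \<or> dec_inc_at m' ys) \<Longrightarrow> (\<forall>y\<in>set ys. 0 \<le> y \<and> y \<le> 1) \<Longrightarrow> g ys = p ys"
  proof (cases "n = 0")
    case True
    show thesis by (rule that[of "\<lambda>_. g []"]) (use True is_poly_fun_const in auto)
  next
    case False
    then have "m' \<in> {1..n}" using m unfolding m'_def by auto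
    then obtain p where "is_poly_fun n p"
      "\<And>ys. length ys = n \<Longrightarrow> dec_inc_at m' ys \<Longrightarrow> \<forall>y\<in>set ys. 0 \<le> y \<and> y \<le> 1 \<Longrightarrow> g ys = p ys"
      using piecewise_polyE[OF assms] by blast
    then show thesis using that False by blast
  qed
  show "\<exists>p. is_poly_fun (Suc n) p \<and>
      (\<forall>xs. length xs = Suc n \<and> dec_inc_at m xs \<and> (\<forall>x\<in>set xs. 0 \<le> x \<and> x \<le> 1) \<longrightarrow> ca g xs = p xs)"
  proof (intro exI conjI allI impI)
    show "is_poly_fun (Suc n) (\<lambda>xs. p (tl xs))" by (rule is_poly_fun_tl[OF p(1)])
    fix xs :: "real list"
    assume xs: "length xs = Suc n \<and> dec_inc_at m xs \<and> (\<forall>x\<in>set xs. 0 \<le> x \<and> x \<le> 1)"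
    then obtain x ys where xs_eq: "xs = x # ys" by (cases xs) auto
    have "n = 0 \<or> dec_inc_at m' ys"
      using xs dec_inc_at_ConsD[of m x ys] unfolding xs_eq m'_def by (cases ys) auto
    then have "g ys = p ys" using p(2) xs unfolding xs_eq by simp
    moreover have "x \<in> {0..1}" "inX (x # ys)" using xs unfolding xs_eq inX_def by auto
    ultimately show "ca g xs = p (tl xs)" unfolding xs_eq ca_Cons by simp
  qed
qed

lemma daN_sample:
  assumes "piecewise_poly n g" "1 \<le> N"
  shows "daN N (sample N n g) = sample N (Suc n) (ca g)"
proof
  fix t
  show "daN N (sample N n g) t = sample N (Suc n) (ca g) t"
  proof (cases t)
    case Nil
    then show ?thesis by (simp add: daN_Nil sample_def)
  next
    case (Cons j s)
    show ?thesis
    proof (cases "inI (j # s) \<and> length s = n \<and> j \<le> N \<and> (\<forall>i\<in>set s. i \<le> N)")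
      case True
      then have "1 \<le> j" "n = 0 \<or> inI s" unfolding inI_def using inI_Cons_tail[of j s] by (auto simp: inI_def)
      moreover have "inX (map (\<lambda>i. real i / real N) (j # s))"
        using inI_imp_inX_scale[OF assms(2)] True by blast
      ultimately show ?thesis
        using True assms(2) unfolding Cons daN_Cons sample_def by (simp add: ca_Cons)
    next
      case False
      then show ?thesis unfolding Cons daN_Cons sample_def by auto
    qed
  qed
qed

subsection \<open>The annihilation operator: a Riemann sum for an integral\<close>

text \<open>\<open>riemann_sum N g s\<close> approximates \<open>castar g (s/N)\<close>: the condition \<open>inI (i # s)\<close> selects
  exactly the nodes \<open>x = i/N\<close> lying in the integration domain of \<open>castar\<close>.\<close>

definition riemann_sum :: "nat \<Rightarrow> cvec \<Rightarrow> nat list \<Rightarrow> complex" where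
  "riemann_sum N g s =
     (\<Sum>i\<in>{1..N}. if inI (i # s) then g (real i / real N # map (\<lambda>i. real i / real N) s) else 0) / of_nat N"

lemma dastarN_sample_Suc:
  assumes "1 \<le> N" "length s = n" "\<forall>i\<in>set s. 1 \<le> i \<and> i \<le> N"
  shows "dastarN N (sample N (Suc n) g) s = of_real (1 / sqrt (real N) ^ n) * riemann_sum N g s"
proof -
  have "1 / sqrt (real N) * (1 / sqrt (real N) ^ Suc n) = 1 / sqrt (real N) ^ n / real N"
    using assms(1) by (simp add: field_simps flip: power2_eq_square)
  then have scale: "complex_of_real (1 / sqrt (real N)) * of_real (1 / sqrt (real N) ^ Suc n)
      = of_real (1 / sqrt (real N) ^ n) / of_nat N"
    by (metis of_real_divide of_real_mult of_real_of_nat_eq)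
  have sum_eq: "(\<Sum>i\<in>{1..N}. if inI (i # s) then sample N (Suc n) g (i # s) else 0)
      = of_real (1 / sqrt (real N) ^ Suc n) *
        (\<Sum>i\<in>{1..N}. if inI (i # s) then g (real i / real N # map (\<lambda>i. real i / real N) s) else 0)"
    using assms(2,3) unfolding sum_distrib_left sample_def by (intro sum.cong) auto
  show ?thesis
    unfolding dastarN_eq sum_eq riemann_sum_def mult.assoc[symmetric] scale by simp
qed

lemma riemann_sum_eq_0:
  assumes "s \<noteq> []" "\<not> inI s" shows "riemann_sum N g s = 0"
proof -
  from assms have "\<not> inI (i # s)" for i using inI_Cons_tail by blast
  then show ?thesis unfolding riemann_sum_def by simp
qed

lemma dastarN_sample_diff_support:
  assumes "dastarN N (sample N (Suc n) g) t - sample N n h t \<noteq> 0"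
  shows "set t \<subseteq> {1..N} \<and> length t = n"
proof (cases "dastarN N (sample N (Suc n) g) t = 0")
  case False
  then obtain i where "inI (i # t)" "sample N (Suc n) g (i # t) \<noteq> 0" by (rule dastarN_nonzeroD)
  then show ?thesis unfolding sample_def inI_def by (auto split: if_splits)
next
  case True
  then have "sample N n h t \<noteq> 0" using assms by auto
  then show ?thesis unfolding sample_def inI_def by (auto split: if_splits)
qed

lemma castar_Nil: "castar g [] = (LINT x:{0..1}|lborel. g [x])"
  unfolding castar_def by simp

lemma castar_Cons:
  "castar g (y0 # ys) =
     (if inX (y0 # ys) then
        (if dec_inc_at 1 (y0 # ys) then (LINT x:{0..y0}|lborel. g (x # y0 # ys)) else 0)
        + (LINT x:{y0..1}|lborel. g (x # y0 # ys))
      else 0)"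
  unfolding castar_def by simp

context
  fixes g :: cvec and n :: nat
    and E :: "nat \<Rightarrow> (nat \<Rightarrow> nat) set" and c :: "nat \<Rightarrow> (nat \<Rightarrow> nat) \<Rightarrow> complex"
  assumes g_support: "\<And>xs. g xs \<noteq> 0 \<Longrightarrow> length xs = Suc n \<and> inX xs \<and> (\<forall>x\<in>set xs. 0 \<le> x \<and> x \<le> 1)"
    and finite_E: "\<And>m. m \<in> {1..Suc n} \<Longrightarrow> finite (E m)"
    and g_eq_poly: "\<And>m xs. m \<in> {1..Suc n} \<Longrightarrow> length xs = Suc n \<Longrightarrow> dec_inc_at m xs \<Longrightarrow>
              \<forall>x\<in>set xs. 0 \<le> x \<and> x \<le> 1 \<Longrightarrow> g xs = poly_expansion (E m) (c m) (Suc n) xs"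
begin

lemma castar_Nil_eq:
  assumes "n = 0"
  shows "castar g [] = poly_integral_first (E 1) (c 1) 0 0 1 []"
  unfolding castar_Nil
proof (rule set_integral_poly_expansion)
  fix x :: real assume "0 < x" "x < 1"
  then show "g [x] = poly_expansion (E 1) (c 1) (Suc 0) [x]"
    using g_eq_poly[of 1 "[x]"] assms by (simp add: dec_inc_at_singleton)
qed (use finite_E in simp_all)

text \<open>For \<open>x\<close> above \<open>hd ys\<close> the point \<open>x # ys\<close> lies on the piece \<open>m + 1\<close>; below \<open>hd ys\<close> it lies
  in \<open>X\<close> only when \<open>m = 1\<close>, and then on the piece \<open>1\<close>.\<close>

lemma castar_Cons_eq:
  assumes "1 \<le> n" "length ys = n" "\<forall>y\<in>set ys. 0 \<le> y \<and> y \<le> 1" "dec_inc_at m ys"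
  shows "castar g ys = (if m = 1 then poly_integral_first (E 1) (c 1) n 0 (hd ys) ys else 0)
                       + poly_integral_first (E (Suc m)) (c (Suc m)) n (hd ys) 1 ys"
proof -
  obtain y0 ys' where ys: "ys = y0 # ys'" using assms(1,2) by (cases ys) auto
  have m: "1 \<le> m" "m \<le> n" using assms(2,4) unfolding dec_inc_at_def by auto
  have y0: "0 \<le> y0" "y0 \<le> 1" using assms(3) ys by auto
  have upper: "(LINT x:{y0..1}|lborel. g (x # ys)) = poly_integral_first (E (Suc m)) (c (Suc m)) n y0 1 ys"
  proof (rule set_integral_poly_expansion)
    fix x :: real assume x: "y0 < x" "x < 1"
    then have "dec_inc_at (Suc m) (x # ys)" using dec_inc_at_Cons_Suc[OF assms(4)] ys by simp
    then show "g (x # ys) = poly_expansion (E (Suc m)) (c (Suc m)) (Suc n) (x # ys)"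
      using g_eq_poly[of "Suc m" "x # ys"] m assms(2,3) x y0 by auto
  qed (use finite_E m y0 in simp_all)
  have lower: "(LINT x:{0..y0}|lborel. g (x # ys)) = poly_integral_first (E 1) (c 1) n 0 y0 ys"
    if "m = 1"
  proof (rule set_integral_poly_expansion)
    fix x :: real assume x: "0 < x" "x < y0"
    then have "dec_inc_at 1 (x # ys)" using dec_inc_at_Cons_1[of ys x] assms(4) that ys by simp
    then show "g (x # ys) = poly_expansion (E 1) (c 1) (Suc n) (x # ys)"
      using g_eq_poly[of 1 "x # ys"] assms(2,3) x y0 by auto
  qed (use finite_E y0 in simp_all)
  have "inX ys" "dec_inc_at 1 ys \<longleftrightarrow> m = 1"
    using assms(4) dec_inc_at_unique[OF assms(4), of 1] unfolding inX_def by blast+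
  then show ?thesis using upper lower unfolding ys castar_Cons by simp
qed

lemma castar_piecewise_poly: "piecewise_poly n (castar g)"
proof (rule piecewise_polyI)
  fix ys assume nz: "castar g ys \<noteq> 0"
  have "castar g ys = 0" if "\<And>x. g (x # ys) = 0"
    using that by (cases ys) (simp_all add: castar_Nil castar_Cons)
  with nz obtain x where "g (x # ys) \<noteq> 0" by blast
  then have "length ys = n" "\<forall>y\<in>set ys. 0 \<le> y \<and> y \<le> 1" using g_support[of "x # ys"] by auto
  moreover have "n = 0 \<or> inX ys"
    using nz \<open>length ys = n\<close> by (cases ys) (auto simp: castar_Cons split: if_splits)
  ultimately show "length ys = n \<and> (n = 0 \<or> inX ys) \<and> (\<forall>y\<in>set ys. 0 \<le> y \<and> y \<le> 1)" by simp
next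
  fix m assume m: "m \<in> {1..n}"
  let ?q = "\<lambda>ys. (if m = 1 then 1 else 0) * poly_integral_first (E 1) (c 1) n 0 (ys ! 0) ys
                 + poly_integral_first (E (Suc m)) (c (Suc m)) n (ys ! 0) 1 ys"
  show "\<exists>p. is_poly_fun n p \<and>
      (\<forall>ys. length ys = n \<and> dec_inc_at m ys \<and> (\<forall>y\<in>set ys. 0 \<le> y \<and> y \<le> 1) \<longrightarrow> castar g ys = p ys)"
  proof (intro exI conjI allI impI)
    show "is_poly_fun n ?q"
      using m finite_E
      by (intro is_poly_fun_add is_poly_fun_cmult is_poly_fun_integral_from_0 is_poly_fun_integral_to_1) auto
    fix ys :: "real list" assume ys: "length ys = n \<and> dec_inc_at m ys \<and> (\<forall>y\<in>set ys. 0 \<le> y \<and> y \<le> 1)"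
    then have "hd ys = ys ! 0" using m by (intro hd_conv_nth) auto
    then show "castar g ys = ?q ys" using castar_Cons_eq[of ys m] m ys by simp
  qed
qed

lemma riemann_sum_castar_error_Nil:
  assumes "n = 0" "1 \<le> N"
  shows "cmod (riemann_sum N g [] - castar g []) \<le> coeff_norm (E 1) (c 1) / real N"
proof -
  have "g [real i / real N] = poly_expansion (E 1) (c 1) (Suc 0) [real i / real N]" if "i \<in> {1..N}" for i
    using g_eq_poly[of 1 "[real i / real N]"] assms that by (simp add: dec_inc_at_singleton)
  then have "riemann_sum N g [] = (\<Sum>i\<in>{0<..N}. poly_expansion (E 1) (c 1) (Suc 0) [real i / real N]) / of_nat N"
    unfolding riemann_sum_def atLeastSucAtMost_greaterThanAtMost[symmetric]
    by (intro arg_cong2[where f="(/)"] sum.cong) (auto simp: inI_singleton)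
  moreover have "castar g [] = poly_integral_first (E 1) (c 1) 0 (real 0 / real N) (real N / real N) []"
    using castar_Nil_eq assms by simp
  ultimately show ?thesis
    using riemann_sum_poly_error[of "E 1" 0 N N "[]" 0 "c 1"] finite_E assms by simp
qed

lemma riemann_sum_Cons_eq:
  assumes "1 \<le> N" "length s = n" "\<forall>i\<in>set s. 1 \<le> i \<and> i \<le> N" "dec_inc_at m s"
  defines "ys \<equiv> map (\<lambda>i. real i / real N) s"
  defines "upper \<equiv> \<lambda>i. poly_expansion (E (Suc m)) (c (Suc m)) (Suc n) (real i / real N # ys)"
    and "lower \<equiv> \<lambda>i. poly_expansion (E 1) (c 1) (Suc n) (real i / real N # ys)"
  shows "riemann_sum N g s = ((\<Sum>i\<in>{hd s<..N}. upper i)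
          + (if m = 1 then (\<Sum>i\<in>{0<..hd s}. lower i) - lower (hd s) else 0)) / of_nat N"
proof -
  let ?h = "\<lambda>i. if inI (i # s) then g (real i / real N # ys) else 0"
  have s_ne: "s \<noteq> []" "m \<le> n" using assms(2,4) unfolding dec_inc_at_def by auto
  then have s: "s \<noteq> []" "inI s" "1 \<le> hd s" "hd s \<le> N" "m \<le> n"
    using assms(3,4) hd_in_set[of s] unfolding inI_def by auto
  have ys: "length ys = n" "\<forall>y\<in>set ys. 0 \<le> y \<and> y \<le> 1" "dec_inc_at m ys"
    using assms(1-4) dec_inc_at_map_scale[OF assms(1)] unfolding ys_def by auto
  have hd_ys: "hd ys = real (hd s) / real N" unfolding ys_def using s(1) by (simp add: hd_map)
  have f_less: "real i / real N < real j / real N \<longleftrightarrow> i < j" for i j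
    using assms(1) by (simp add: divide_less_cancel)
  have f_unit: "0 \<le> real i / real N \<and> real i / real N \<le> 1" if "i \<le> N" for i
    using that assms(1) by simp
  have h_upper: "?h i = upper i" if "i \<in> {hd s<..N}" for i
  proof -
    have "dec_inc_at (Suc m) (real i / real N # ys)"
      using dec_inc_at_Cons_Suc[OF ys(3)] that hd_ys f_less by simp
    then show ?thesis
      using that s inI_Cons_iff[OF s(2) assms(4), of i] g_eq_poly[of "Suc m"] ys f_unit[of i]
      unfolding upper_def by auto
  qed
  have h_lower: "?h i = (if m = 1 then lower i else 0)" if "i \<in> {1..<hd s}" for i
  proof -
    have "dec_inc_at 1 (real i / real N # ys)" if "m = 1"
      using dec_inc_at_Cons_1[of ys] ys(3) that \<open>i \<in> {1..<hd s}\<close> hd_ys f_less by simp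
    then show ?thesis
      using that s inI_Cons_iff[OF s(2) assms(4), of i] g_eq_poly[of 1] ys f_unit[of i]
      unfolding lower_def by auto
  qed
  have h_hd: "?h (hd s) = 0" using inI_Cons_iff[OF s(2) assms(4)] by simp
  have "{1..N} = {1..<hd s} \<union> ({hd s} \<union> {hd s<..N})" using s by auto
  then have "(\<Sum>i\<in>{1..N}. ?h i) = (\<Sum>i\<in>{1..<hd s}. ?h i) + (\<Sum>i\<in>{hd s<..N}. ?h i)"
    by (simp only:) (subst sum.union_disjoint, auto simp: h_hd)+
  also have "\<dots> = (if m = 1 then (\<Sum>i\<in>{1..<hd s}. lower i) else 0) + (\<Sum>i\<in>{hd s<..N}. upper i)"
    using h_upper h_lower by simp
  also have "(\<Sum>i\<in>{1..<hd s}. lower i) = (\<Sum>i\<in>{0<..hd s}. lower i) - lower (hd s)"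
  proof -
    have "{0<..hd s} = insert (hd s) {1..<hd s}" using s by auto
    then show ?thesis by simp
  qed
  finally show ?thesis unfolding riemann_sum_def ys_def by (simp add: add.commute)
qed

lemma riemann_sum_castar_error_Cons:
  assumes "1 \<le> n" "1 \<le> N" "length s = n" "\<forall>i\<in>set s. 1 \<le> i \<and> i \<le> N" "dec_inc_at m s"
  shows "cmod (riemann_sum N g s - castar g (map (\<lambda>i. real i / real N) s))
           \<le> (coeff_norm (E (Suc m)) (c (Suc m)) + 2 * coeff_norm (E 1) (c 1)) / real N"
proof -
  define ys where "ys = map (\<lambda>i. real i / real N) s"
  define upper where "upper i = poly_expansion (E (Suc m)) (c (Suc m)) (Suc n) (real i / real N # ys)" for i
  define lower where "lower i = poly_expansion (E 1) (c 1) (Suc n) (real i / real N # ys)" for i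
  define IU where "IU = poly_integral_first (E (Suc m)) (c (Suc m)) n (real (hd s) / real N) (real N / real N) ys"
  define IL where "IL = poly_integral_first (E 1) (c 1) n (real 0 / real N) (real (hd s) / real N) ys"
  have m: "1 \<le> m" "m \<le> n" using assms(3,5) unfolding dec_inc_at_def by auto
  have "s \<noteq> []" using assms(1,3) by auto
  then have s: "s \<noteq> []" "1 \<le> hd s" "hd s \<le> N" using assms(4) hd_in_set[of s] by auto
  have ys: "length ys = n" "\<forall>y\<in>set ys. 0 \<le> y \<and> y \<le> 1" "dec_inc_at m ys" "hd ys = real (hd s) / real N"
    using assms(2-5) dec_inc_at_map_scale[OF assms(2)] s(1) unfolding ys_def by (auto simp: hd_map)
  define A where "A = (\<Sum>i\<in>{hd s<..N}. upper i) / of_nat N - IU"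
  define B where "B = (\<Sum>i\<in>{0<..hd s}. lower i) / of_nat N - IL"
  define C where "C = lower (hd s) / of_nat N"
  have "riemann_sum N g s - castar g ys = A + (if m = 1 then B - C else 0)"
    using riemann_sum_Cons_eq[OF assms(2-5)] castar_Cons_eq[OF assms(1) ys(1-3)] assms(2) ys(4)
    unfolding upper_def lower_def IU_def IL_def ys_def A_def B_def C_def
    by (simp add: add_divide_distrib diff_divide_distrib)
  also have "cmod \<dots> \<le> cmod A + (cmod B + cmod C)"
    using norm_triangle_ineq[of A "B - C"] norm_triangle_ineq4[of B C] by auto
  also have "\<dots> \<le> coeff_norm (E (Suc m)) (c (Suc m)) / real N + (coeff_norm (E 1) (c 1) / real N + coeff_norm (E 1) (c 1) / real N)"
  proof (intro add_mono)
    show "cmod A \<le> coeff_norm (E (Suc m)) (c (Suc m)) / real N"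
      unfolding A_def upper_def IU_def using finite_E m s assms(2) ys by (intro riemann_sum_poly_error) auto
    show "cmod B \<le> coeff_norm (E 1) (c 1) / real N"
      unfolding B_def lower_def IL_def using finite_E s assms(2) ys by (intro riemann_sum_poly_error) auto
    show "cmod C \<le> coeff_norm (E 1) (c 1) / real N"
      unfolding C_def lower_def norm_divide norm_of_nat using ys s
      by (intro divide_right_mono norm_poly_expansion_le) auto
  qed
  finally show ?thesis unfolding ys_def by (simp add: add_divide_distrib)
qed

lemma riemann_sum_castar_error:
  assumes "1 \<le> N" "length s = n" "\<forall>i\<in>set s. 1 \<le> i \<and> i \<le> N" "n = 0 \<or> inI s"
  shows "cmod (riemann_sum N g s - castar g (map (\<lambda>i. real i / real N) s))
           \<le> 3 * (\<Sum>m\<in>{1..Suc n}. coeff_norm (E m) (c m)) / real N"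
proof -
  let ?M = "\<Sum>m\<in>{1..Suc n}. coeff_norm (E m) (c m)"
  have le_M: "coeff_norm (E m) (c m) \<le> ?M" if "m \<in> {1..Suc n}" for m
    using that by (intro member_le_sum coeff_norm_nonneg) auto
  have N: "0 < real N" using assms(1) by simp
  show ?thesis
  proof (cases "n = 0")
    case True
    then have "cmod (riemann_sum N g s - castar g (map (\<lambda>i. real i / real N) s)) \<le> coeff_norm (E 1) (c 1) / real N"
      using riemann_sum_castar_error_Nil[OF True assms(1)] assms(2) by simp
    also have "\<dots> \<le> 3 * ?M / real N"
      using le_M[of 1] coeff_norm_nonneg[of "E 1" "c 1"] N by (intro divide_right_mono) auto
    finally show ?thesis .
  next
    case False
    then obtain m where m: "dec_inc_at m s" using assms(4) unfolding inI_def by blast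
    then have "m + 1 \<in> {1..Suc n}" using assms(2) unfolding dec_inc_at_def by auto
    then have "coeff_norm (E (Suc m)) (c (Suc m)) + 2 * coeff_norm (E 1) (c 1) \<le> 3 * ?M"
      using le_M[of "Suc m"] le_M[of 1] by simp
    with N have "(coeff_norm (E (Suc m)) (c (Suc m)) + 2 * coeff_norm (E 1) (c 1)) / real N \<le> 3 * ?M / real N"
      by (intro divide_right_mono) auto
    with riemann_sum_castar_error_Cons[OF _ assms(1-3) m] False show ?thesis by simp
  qed
qed

lemma norm_dastarN_sample_castar_le:
  assumes "1 \<le> N" "length t = n" "\<forall>i\<in>set t. 1 \<le> i \<and> i \<le> N"
  shows "cmod (dastarN N (sample N (Suc n) g) t - sample N n (castar g) t)
           \<le> 1 / sqrt (real N) ^ n * (3 * (\<Sum>m\<in>{1..Suc n}. coeff_norm (E m) (c m)) / real N)"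
proof -
  let ?M = "\<Sum>m\<in>{1..Suc n}. coeff_norm (E m) (c m)"
  let ?D = "riemann_sum N g t - (if n = 0 \<or> inI t then castar g (map (\<lambda>i. real i / real N) t) else 0)"
  have diff_eq: "dastarN N (sample N (Suc n) g) t - sample N n (castar g) t = of_real (1 / sqrt (real N) ^ n) * ?D"
    using assms(2,3) unfolding dastarN_sample_Suc[OF assms] sample_def by (auto simp: right_diff_distrib)
  have bound_D: "cmod ?D \<le> 3 * ?M / real N"
  proof (cases "n = 0 \<or> inI t")
    case True
    then show ?thesis using riemann_sum_castar_error[OF assms] by simp
  next
    case False
    moreover have "0 \<le> ?M" by (intro sum_nonneg coeff_norm_nonneg)
    ultimately show ?thesis using riemann_sum_eq_0[of t N g] assms(2) by auto
  qed
  have "cmod (dastarN N (sample N (Suc n) g) t - sample N n (castar g) t) = 1 / sqrt (real N) ^ n * cmod ?D"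
    unfolding diff_eq norm_mult norm_of_real by simp
  also have "\<dots> \<le> 1 / sqrt (real N) ^ n * (3 * ?M / real N)"
    by (rule mult_left_mono[OF bound_D]) simp
  finally show ?thesis .
qed

lemma dnorm_dastarN_sample_castar:
  assumes "1 \<le> N"
  shows "dnorm (\<lambda>t. dastarN N (sample N (Suc n) g) t - sample N n (castar g) t)
           \<le> 3 * (\<Sum>m\<in>{1..Suc n}. coeff_norm (E m) (c m)) / real N"
proof -
  let ?M = "\<Sum>m\<in>{1..Suc n}. coeff_norm (E m) (c m)"
  define S where "S = {t. set t \<subseteq> {1..N} \<and> length t = n}"
  have "dnorm (\<lambda>t. dastarN N (sample N (Suc n) g) t - sample N n (castar g) t)
      \<le> sqrt (real (card S)) * (1 / sqrt (real N) ^ n * (3 * ?M / real N))"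
  proof (rule dnorm_le_sqrt_card)
    show "finite S" unfolding S_def by (rule finite_lists_length_eq) simp
    show "0 \<le> 1 / sqrt (real N) ^ n * (3 * ?M / real N)"
      by (simp add: sum_nonneg coeff_norm_nonneg)
    fix t assume "t \<in> S"
    then have "length t = n" "\<forall>i\<in>set t. 1 \<le> i \<and> i \<le> N" unfolding S_def by auto
    then show "cmod (dastarN N (sample N (Suc n) g) t - sample N n (castar g) t)
        \<le> 1 / sqrt (real N) ^ n * (3 * ?M / real N)"
      by (rule norm_dastarN_sample_castar_le[OF assms])
  qed (use dastarN_sample_diff_support in \<open>auto simp: S_def\<close>)
  also have "card S = N ^ n" unfolding S_def by (subst card_lists_length_eq) simp_all
  finally show ?thesis using assms by (simp add: real_sqrt_power)
qed

end

lemma castar_sample_approx: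
  assumes "piecewise_poly (Suc n) g"
  shows "piecewise_poly n (castar g)"
    and "\<exists>C. \<forall>N\<ge>1. dnorm (\<lambda>t. dastarN N (sample N (Suc n) g) t - sample N n (castar g) t) \<le> C / real N"
proof -
  have "\<forall>m\<in>{1..Suc n}. \<exists>Ec. finite (fst Ec) \<and>
      (\<forall>xs. length xs = Suc n \<and> dec_inc_at m xs \<and> (\<forall>x\<in>set xs. 0 \<le> x \<and> x \<le> 1)
         \<longrightarrow> g xs = poly_expansion (fst Ec) (snd Ec) (Suc n) xs)"
  proof
    fix m assume "m \<in> {1..Suc n}"
    then obtain p where "is_poly_fun (Suc n) p"
      "\<And>xs. length xs = Suc n \<Longrightarrow> dec_inc_at m xs \<Longrightarrow> \<forall>x\<in>set xs. 0 \<le> x \<and> x \<le> 1 \<Longrightarrow> g xs = p xs"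
      using piecewise_polyE[OF assms] by blast
    then show "\<exists>Ec. finite (fst Ec) \<and> (\<forall>xs. length xs = Suc n \<and> dec_inc_at m xs \<and> (\<forall>x\<in>set xs. 0 \<le> x \<and> x \<le> 1)
         \<longrightarrow> g xs = poly_expansion (fst Ec) (snd Ec) (Suc n) xs)"
      unfolding is_poly_fun_iff_poly_expansion by fastforce
  qed
  from bchoice[OF this] obtain Ec where Ec: "\<forall>m\<in>{1..Suc n}. finite (fst (Ec m)) \<and>
      (\<forall>xs. length xs = Suc n \<and> dec_inc_at m xs \<and> (\<forall>x\<in>set xs. 0 \<le> x \<and> x \<le> 1)
         \<longrightarrow> g xs = poly_expansion (fst (Ec m)) (snd (Ec m)) (Suc n) xs)"
    by blast
  define E where "E m = fst (Ec m)" for m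
  define c where "c m = snd (Ec m)" for m
  have support: "\<And>xs. g xs \<noteq> 0 \<Longrightarrow> length xs = Suc n \<and> inX xs \<and> (\<forall>x\<in>set xs. 0 \<le> x \<and> x \<le> 1)"
    using piecewise_poly_supportD[OF assms] by auto
  have finite_E: "\<And>m. m \<in> {1..Suc n} \<Longrightarrow> finite (E m)"
    using Ec unfolding E_def by blast
  have g_eq_poly: "\<And>m xs. m \<in> {1..Suc n} \<Longrightarrow> length xs = Suc n \<Longrightarrow> dec_inc_at m xs \<Longrightarrow>
      \<forall>x\<in>set xs. 0 \<le> x \<and> x \<le> 1 \<Longrightarrow> g xs = poly_expansion (E m) (c m) (Suc n) xs"
    using Ec unfolding E_def c_def by blast
  show "piecewise_poly n (castar g)"
    by (rule castar_piecewise_poly[of g n E c, OF support finite_E g_eq_poly])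
  show "\<exists>C. \<forall>N\<ge>1. dnorm (\<lambda>t. dastarN N (sample N (Suc n) g) t - sample N n (castar g) t) \<le> C / real N"
    using dnorm_dastarN_sample_castar[of g n E c, OF support finite_E g_eq_poly] by blast
qed

lemma tree_word_disc_add:
  "tree_word (daN N) (dastarN N) t (\<lambda>x. u x + v x)
     = (\<lambda>x. tree_word (daN N) (dastarN N) t u x + tree_word (daN N) (dastarN N) t v x)"
  by (induction t arbitrary: u v) (simp_all add: daN_add dastarN_add)

lemma finite_support_tree_word_disc:
  "finite_support u \<Longrightarrow> finite_support (tree_word (daN N) (dastarN N) t u)"
  by (induction t arbitrary: u) (simp_all add: finite_support_daN finite_support_dastarN)

lemma dnorm_tree_word_disc_le:
  "finite_support u \<Longrightarrow> 1 \<le> N \<Longrightarrow> dnorm (tree_word (daN N) (dastarN N) t u) \<le> dnorm u"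
proof (induction t arbitrary: u)
  case (Node a b)
  let ?A = "tree_word (daN N) (dastarN N) a" and ?B = "tree_word (daN N) (dastarN N) b"
  have "finite_support (?B u)" "finite_support (daN N (?B u))" "finite_support (?A (daN N (?B u)))"
    using Node.prems by (simp_all add: finite_support_tree_word_disc finite_support_daN)
  then have "dnorm (dastarN N (?A (daN N (?B u)))) \<le> dnorm u"
    using Node dnorm_dastarN_le dnorm_daN_le by (meson order.trans)
  then show ?case by simp
qed simp

text \<open>The error of the word for \<open>Node a b\<close> splits into the errors of the three factors
  \<open>a\<^sup>*(N)\<close>, \<open>a\<^sub>\<pi>\<^sub>'(N)\<close> and \<open>a\<^sub>\<pi>\<^sub>'\<^sub>'(N)\<close>, transported by contractions; \<open>a(N)\<close> itself is exact on samples.\<close>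

lemma dnorm_Node_error_le:
  assumes "finite_support e1" "finite_support e2" "finite_support e3" "1 \<le> N"
  shows "dnorm (\<lambda>x. e3 x + dastarN N (\<lambda>y. e1 y + tree_word (daN N) (dastarN N) a (daN N e2) y) x)
           \<le> dnorm e1 + dnorm e2 + dnorm e3"
proof -
  let ?e = "\<lambda>y. e1 y + tree_word (daN N) (dastarN N) a (daN N e2) y"
  have "finite_support (tree_word (daN N) (dastarN N) a (daN N e2))"
    by (intro finite_support_tree_word_disc finite_support_daN assms)
  then have fin: "finite_support ?e" by (intro finite_support_add assms)
  have "dnorm (\<lambda>x. e3 x + dastarN N ?e x) \<le> dnorm e3 + dnorm (dastarN N ?e)"
    by (rule dnorm_triangle[OF assms(3) finite_support_dastarN[OF fin]])
  also have "\<dots> \<le> dnorm e3 + dnorm ?e" using dnorm_dastarN_le[OF fin assms(4)] by simp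
  also have "dnorm ?e \<le> dnorm e1 + dnorm (tree_word (daN N) (dastarN N) a (daN N e2))"
    by (rule dnorm_triangle) fact+
  also have "dnorm (tree_word (daN N) (dastarN N) a (daN N e2)) \<le> dnorm e2"
    using dnorm_tree_word_disc_le[OF finite_support_daN[OF assms(2)] assms(4)] dnorm_daN_le[OF assms(2,4)]
    by (rule order.trans)
  finally show ?thesis by simp
qed

lemma piecewise_poly_tree_word:
  "piecewise_poly n g \<Longrightarrow> piecewise_poly n (tree_word ca castar t g)"
proof (induction t arbitrary: n g)
  case (Node a b)
  then show ?case using ca_piecewise_poly castar_sample_approx(1) by simp
qed simp

lemma tree_word_sample_approx:
  assumes "piecewise_poly n g"
  shows "\<exists>C. \<forall>N\<ge>1. dnorm (\<lambda>x. tree_word (daN N) (dastarN N) t (sample N n g) x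
                                - sample N n (tree_word ca castar t g) x) \<le> C / real N"
  using assms
proof (induction t arbitrary: n g)
  case Leaf
  then show ?case using dnorm_zero by (intro exI[of _ 0]) simp
next
  case (Node a b)
  let ?Ad = "\<lambda>N. tree_word (daN N) (dastarN N) a" and ?Bd = "\<lambda>N. tree_word (daN N) (dastarN N) b"
  define g2 where "g2 = tree_word ca castar b g"
  define g1 where "g1 = tree_word ca castar a (ca g2)"
  have pp2: "piecewise_poly n g2" unfolding g2_def using Node.prems by (rule piecewise_poly_tree_word)
  then have pp1: "piecewise_poly (Suc n) g1"
    unfolding g1_def by (intro piecewise_poly_tree_word ca_piecewise_poly)
  obtain C2 where C2: "\<forall>N\<ge>1. dnorm (\<lambda>x. ?Bd N (sample N n g) x - sample N n g2 x) \<le> C2 / real N"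
    using Node.IH(2)[OF Node.prems] unfolding g2_def by blast
  obtain C1 where C1: "\<forall>N\<ge>1. dnorm (\<lambda>x. ?Ad N (sample N (Suc n) (ca g2)) x - sample N (Suc n) g1 x) \<le> C1 / real N"
    using Node.IH(1)[OF ca_piecewise_poly[OF pp2]] unfolding g1_def by blast
  obtain C3 where C3: "\<forall>N\<ge>1. dnorm (\<lambda>x. dastarN N (sample N (Suc n) g1) x - sample N n (castar g1) x) \<le> C3 / real N"
    using castar_sample_approx(2)[OF pp1] by blast
  show ?case
  proof (intro exI allI impI)
    fix N :: nat assume N: "1 \<le> N"
    define e2 where "e2 = (\<lambda>x. ?Bd N (sample N n g) x - sample N n g2 x)"
    define e1 where "e1 = (\<lambda>x. ?Ad N (sample N (Suc n) (ca g2)) x - sample N (Suc n) g1 x)"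
    define e3 where "e3 = (\<lambda>x. dastarN N (sample N (Suc n) g1) x - sample N n (castar g1) x)"
    have fs: "finite_support e1" "finite_support e2" "finite_support e3"
      unfolding e1_def e2_def e3_def
      by (intro finite_support_diff finite_support_tree_word_disc finite_support_dastarN finite_support_sample)+
    have Bd: "?Bd N (sample N n g) = (\<lambda>x. sample N n g2 x + e2 x)" unfolding e2_def by simp
    have Ad: "?Ad N (daN N (?Bd N (sample N n g))) = (\<lambda>x. sample N (Suc n) g1 x + (e1 x + ?Ad N (daN N e2) x))"
      unfolding Bd daN_add daN_sample[OF pp2 N] tree_word_disc_add e1_def by (simp add: fun_eq_iff)
    have "dnorm (\<lambda>x. tree_word (daN N) (dastarN N) (Node a b) (sample N n g) x
                   - sample N n (tree_word ca castar (Node a b) g) x)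
        = dnorm (\<lambda>x. e3 x + dastarN N (\<lambda>y. e1 y + ?Ad N (daN N e2) y) x)"
      unfolding e3_def tree_word.simps comp_def Ad dastarN_add by (intro arg_cong[where f=dnorm] ext) (simp add: g1_def g2_def)
    also have "\<dots> \<le> dnorm e1 + dnorm e2 + dnorm e3"
      by (rule dnorm_Node_error_le[OF fs N])
    also have "\<dots> \<le> C1 / real N + C2 / real N + C3 / real N"
      using C1 C2 C3 N unfolding e1_def e2_def e3_def by (intro add_mono) auto
    finally show "dnorm (\<lambda>x. tree_word (daN N) (dastarN N) (Node a b) (sample N n g) x
        - sample N n (tree_word ca castar (Node a b) g) x) \<le> (C1 + C2 + C3) / real N"
      by (simp add: add_divide_distrib)
  qed
qed

theorem mainTheorem17:
  fixes \<pi> :: "nat set set" and k :: nat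
  assumes "ncpp k \<pi>"
  shows "(\<exists>C. \<forall>N\<ge>1. dnorm (\<lambda>t. a_disc N \<pi> Omega t - phi (a_cont \<pi>) * Omega t) \<le> C / real N)
    \<and> (\<forall>n g. n \<ge> 1 \<and> inD n g \<longrightarrow>
         (\<exists>C. \<forall>N\<ge>1. dnorm (\<lambda>t. a_disc N \<pi> (vN N n g) t - vN N n (a_cont \<pi> g) t) \<le> C / real N))"
proof -
  obtain t where t: "tree_partition t = \<pi>" using ncpp_imp_tree_partition[OF assms] by blast
  have a_disc: "a_disc N \<pi> = tree_word (daN N) (dastarN N) t" for N
    unfolding a_disc_def t[symmetric] by (rule word_op_tree_partition)
  have a_cont: "a_cont \<pi> = tree_word ca castar t"
    unfolding a_cont_def t[symmetric] by (rule word_op_tree_partition)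
  have "sample N 0 Lambda = Omega" "sample N 0 (a_cont \<pi> Lambda) = (\<lambda>x. phi (a_cont \<pi>) * Omega x)" for N
    unfolding sample_0 Omega_def Lambda_def phi_def by auto
  then have vacuum: "\<exists>C. \<forall>N\<ge>1. dnorm (\<lambda>t. a_disc N \<pi> Omega t - phi (a_cont \<pi>) * Omega t) \<le> C / real N"
    using tree_word_sample_approx[OF piecewise_poly_Lambda, of t] unfolding a_disc a_cont by simp
  have "\<exists>C. \<forall>N\<ge>1. dnorm (\<lambda>t. a_disc N \<pi> (vN N n g) t - vN N n (a_cont \<pi> g) t) \<le> C / real N"
    if "n \<ge> 1" "inD n g" for n g
    using tree_word_sample_approx[OF inD_imp_piecewise_poly[OF that], of t]
    unfolding a_disc a_cont sample_eq_vN[OF that(1)] .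
  with vacuum show ?thesis by blast
qed

end
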